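(* Assume the setting described in the context. Among measures $\mu\in\mathcal M_{+,T_0}(V\times\mathcal S_{T_0})$ of the form $\mu=\mu_tdt$, the unique weak solution of $\partial_t\mu_t+\mathrm{div}\,Q^\mu_t=0$ is $\mu=\pi$. Here $Q^\mu_t(y,z)=\mu_t(y)r(y,z;t)$, and "weak solution" means $\int_0^{T_0}\sum_y\mu_s(y)\partial_sf(y,s)ds=\int_0^{T_0}\sum_y\mathrm{div}\,Q^\mu_s(y)f(y,s)ds$ for every $f:V\times\mathcal S_{T_0}\to\mathbb R$ that is $C^1$ in time.
   Context: Let $V$ be a finite set, $T_0>0$, $\mathcal S_{T_0}=\mathbb R/T_0\mathbb Z$ (functions on it identified with $T_0$-periodic functions). For $y,z\in V$, $r(y,z;\cdot):[0,\infty)\to[0,\infty)$ is measurable, locally integrable and $T_0$-periodic, $r(x,x;\cdot)=0$; $E$ is the set of $(y,z)$, $y\ne z$, with $r(y,z;t)>0$ for all $t>0$. Assume (A1) if $r(y,z;t)>0$ for some $t>0$ then for all $t>0$; (A2) the directed graph $(V,E)$ is strongly connected. $(\xi_t)$ is the time-inhomogeneous Markov chain on $V$ with jump rates $r(y,z;t)$. $\pi_0$ is the unique invariant distribution of $(\xi_{nT_0})_{n\ge0}$, $\pi_t$ the law of $\xi_t$ when $\xi_0\sim\pi_0$, and $\pi:=\pi_tdt$. $\mathcal M_{+,T_0}(V\times\mathcal S_{T_0})$ is the set of nonnegative measures on $V\times\mathcal S_{T_0}$ with total mass $T_0$. $\mathrm{div}A(y)=\sum_zA(y,z)-\sum_zA(z,y)$.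 *)

theory Defs
  imports "HOL-Analysis.Analysis"
begin

text \<open>Jump rates r y z t, only the values for t \<ge> 0 are relevant.\<close>

definition rate_edge :: "('v \<Rightarrow> 'v \<Rightarrow> real \<Rightarrow> real) \<Rightarrow> 'v \<Rightarrow> 'v \<Rightarrow> bool" where
  "rate_edge r y z \<longleftrightarrow> y \<noteq> z \<and> (\<forall>t>0. r y z t > 0)"

definition rate_assms :: "real \<Rightarrow> ('v::finite \<Rightarrow> 'v \<Rightarrow> real \<Rightarrow> real) \<Rightarrow> bool" where
  "rate_assms T0 r \<longleftrightarrow> T0 > 0
     \<and> (\<forall>y z t. 0 \<le> t \<longrightarrow> 0 \<le> r y z t)
     \<and> (\<forall>y z. set_borel_measurable lborel {0..} (r y z))
     \<and> (\<forall>y z b. 0 \<le> b \<longrightarrow> set_integrable lborel {0..b} (r y z))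
     \<and> (\<forall>y z t. 0 \<le> t \<longrightarrow> r y z (t + T0) = r y z t)
     \<and> (\<forall>x t. r x x t = 0)"

definition rate_A1 :: "('v \<Rightarrow> 'v \<Rightarrow> real \<Rightarrow> real) \<Rightarrow> bool" where
  "rate_A1 r \<longleftrightarrow> (\<forall>y z. (\<exists>t>0. r y z t > 0) \<longrightarrow> (\<forall>t>0. r y z t > 0))"

definition rate_A2 :: "('v \<Rightarrow> 'v \<Rightarrow> real \<Rightarrow> real) \<Rightarrow> bool" where
  "rate_A2 r \<longleftrightarrow> (\<forall>y z. (y, z) \<in> {(a, b). rate_edge r a b}\<^sup>*)"

definition gen :: "('v::finite \<Rightarrow> 'v \<Rightarrow> real \<Rightarrow> real) \<Rightarrow> real \<Rightarrow> 'v \<Rightarrow> 'v \<Rightarrow> real" where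
  "gen r s y z = r y z s - (if y = z then (\<Sum>w\<in>UNIV. r y w s) else 0)"

text \<open>P t x z = probability that the chain started at x at time 0 is in z at time t,
  characterised as the solution of the Kolmogorov forward equation (integral form).\<close>
definition is_transition_from0 ::
  "('v::finite \<Rightarrow> 'v \<Rightarrow> real \<Rightarrow> real) \<Rightarrow> (real \<Rightarrow> 'v \<Rightarrow> 'v \<Rightarrow> real) \<Rightarrow> bool" where
  "is_transition_from0 r P \<longleftrightarrow>
     (\<forall>x z t. 0 \<le> t \<longrightarrow>
        set_integrable lborel {0..t} (\<lambda>s. \<Sum>y\<in>UNIV. P s x y * gen r s y z)
      \<and> P t x z = (if x = z then 1 else 0)
                  + (LINT s:{0..t}|lborel. (\<Sum>y\<in>UNIV. P s x y * gen r s y z)))"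

definition divQ :: "('v::finite \<Rightarrow> 'v \<Rightarrow> real \<Rightarrow> real) \<Rightarrow> ('v \<Rightarrow> real \<Rightarrow> real) \<Rightarrow> real \<Rightarrow> 'v \<Rightarrow> real" where
  "divQ r \<mu> s y = (\<Sum>z\<in>UNIV. \<mu> y s * r y z s) - (\<Sum>z\<in>UNIV. \<mu> z s * r z y s)"

text \<open>Measures mu = mu_t dt in M_{+,T0}(V x S_T0), given by a density mu y t on [0,T0].\<close>
definition in_M_plus :: "real \<Rightarrow> ('v::finite \<Rightarrow> real \<Rightarrow> real) \<Rightarrow> bool" where
  "in_M_plus T0 \<mu> \<longleftrightarrow>
     (\<forall>y. set_borel_measurable lborel {0..T0} (\<mu> y))
   \<and> (\<forall>y t. t \<in> {0..T0} \<longrightarrow> 0 \<le> \<mu> y t)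
   \<and> (\<forall>y. set_integrable lborel {0..T0} (\<mu> y))
   \<and> (LINT t:{0..T0}|lborel. (\<Sum>y\<in>UNIV. \<mu> y t)) = T0"

definition test_fun :: "real \<Rightarrow> ('v \<Rightarrow> real \<Rightarrow> real) \<Rightarrow> ('v \<Rightarrow> real \<Rightarrow> real) \<Rightarrow> bool" where
  "test_fun T0 f f' \<longleftrightarrow>
     (\<forall>y t. f y (t + T0) = f y t)
   \<and> (\<forall>y t. (f y has_real_derivative f' y t) (at t))
   \<and> (\<forall>y. continuous_on UNIV (f' y))"

definition weak_solution :: "real \<Rightarrow> ('v::finite \<Rightarrow> 'v \<Rightarrow> real \<Rightarrow> real) \<Rightarrow> ('v \<Rightarrow> real \<Rightarrow> real) \<Rightarrow> bool" where
  "weak_solution T0 r \<mu> \<longleftrightarrow>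
     (\<forall>f f'. test_fun T0 f f' \<longrightarrow>
        set_integrable lborel {0..T0} (\<lambda>s. \<Sum>y\<in>UNIV. \<mu> y s * f' y s)
      \<and> set_integrable lborel {0..T0} (\<lambda>s. \<Sum>y\<in>UNIV. divQ r \<mu> s y * f y s)
      \<and> (LINT s:{0..T0}|lborel. (\<Sum>y\<in>UNIV. \<mu> y s * f' y s))
          = (LINT s:{0..T0}|lborel. (\<Sum>y\<in>UNIV. divQ r \<mu> s y * f y s)))"

end

theory Submission
  imports Defs
begin

(*
  Write L_t for the generator, so that the law u_t of the chain solves the Kolmogorov forward
  equation u_t' = u_t L_t, i.e. d/dt u_t(y) = - div Q^u_t(y).

  Existence: pi_t = pi_0 P_t solves the forward equation, and the invariance of pi_0 under P_{T0}
  makes it T0-periodic; integrating by parts against periodic test functions gives the weak form.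

  Uniqueness: testing a weak solution mu with test functions supported on a single vertex y shows
  that mu_t(y) + int_0^t div Q^mu_s(y) ds is orthogonal to every periodic derivative phi', hence
  a.e. constant (du Bois-Reymond).  So mu agrees a.e. with a continuous T0-periodic solution nu of
  the forward equation.  Solutions of the forward equation are unique, so nu_t = nu_0 P_t, and
  nu_0 is an invariant probability vector of P_{T0}.  By strong connectivity all entries of
  P_{T0} are positive, and such a matrix has only one invariant probability vector, pi_0.
*)

section \<open>Lebesgue integrals over intervals\<close>

lemma set_borel_integral_eq_integral_subinterval:
  fixes f :: "real \<Rightarrow> real"
  assumes "set_integrable lborel {a..b} f" "a \<le> c" "d \<le> b"
  shows "f integrable_on {c..d}" "(LINT s:{c..d}|lborel. f s) = integral {c..d} f"
proof -
  have "set_integrable lborel {c..d} f"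
    by (rule set_integrable_subset[OF assms(1)]) (use assms in auto)
  then show "f integrable_on {c..d}" "(LINT s:{c..d}|lborel. f s) = integral {c..d} f"
    using set_borel_integral_eq_integral by auto
qed

lemma set_integrable_sum:
  fixes f :: "'i \<Rightarrow> 'a \<Rightarrow> real"
  assumes "finite I" "\<And>i. i \<in> I \<Longrightarrow> set_integrable M A (f i)"
  shows "set_integrable M A (\<lambda>x. \<Sum>i\<in>I. f i x)"
  unfolding set_integrable_def scaleR_sum_right
  by (rule Bochner_Integration.integrable_sum) (use assms in \<open>auto simp: set_integrable_def\<close>)

lemma set_integral_sum:
  fixes f :: "'i \<Rightarrow> 'a \<Rightarrow> real"
  assumes "finite I" "\<And>i. i \<in> I \<Longrightarrow> set_integrable M A (f i)"
  shows "(LINT x:A|M. (\<Sum>i\<in>I. f i x)) = (\<Sum>i\<in>I. LINT x:A|M. f i x)"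
  unfolding set_lebesgue_integral_def scaleR_sum_right
  by (rule Bochner_Integration.integral_sum) (use assms in \<open>auto simp: set_integrable_def\<close>)

lemma set_integral_cong_AE_integrable:
  fixes f g :: "'a \<Rightarrow> real"
  assumes "set_integrable M A f" "set_integrable M A g" "AE x in M. x \<in> A \<longrightarrow> f x = g x"
  shows "(LINT x:A|M. f x) = (LINT x:A|M. g x)"
  unfolding set_lebesgue_integral_def
proof (rule integral_cong_AE)
  show "(\<lambda>x. indicator A x *\<^sub>R f x) \<in> borel_measurable M" "(\<lambda>x. indicator A x *\<^sub>R g x) \<in> borel_measurable M"
    using assms(1,2) unfolding set_integrable_def by (auto intro: borel_measurable_integrable)
  show "AE x in M. indicator A x *\<^sub>R f x = indicator A x *\<^sub>R g x"
    using assms(3) by eventually_elim (auto simp: indicator_def)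
qed

lemma set_integral_degenerate_interval:
  fixes f :: "real \<Rightarrow> real"
  shows "(LINT s:{a..a}|lborel. f s) = 0"
proof -
  have "AE x in lborel. indicator {a..a} x *\<^sub>R f x = 0"
    using AE_lborel_singleton[of a] by eventually_elim (auto simp: indicator_def)
  then show ?thesis unfolding set_lebesgue_integral_def by (rule integral_eq_zero_AE)
qed

lemma set_integrable_continuous_mult:
  fixes g \<phi> :: "real \<Rightarrow> real"
  assumes g: "set_integrable lborel {a..b} g" and \<phi>: "continuous_on {a..b} \<phi>"
  shows "set_integrable lborel {a..b} (\<lambda>s. \<phi> s * g s)"
proof -
  obtain C where C: "\<And>t. t \<in> {a..b} \<Longrightarrow> \<bar>\<phi> t\<bar> \<le> C"
    using compact_continuous_image[OF \<phi> compact_Icc]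
    by (metis bounded_iff compact_imp_bounded image_eqI real_norm_def)
  show ?thesis
  proof (rule set_integrable_bound[where f="\<lambda>s. C * g s"])
    show "set_integrable lborel {a..b} (\<lambda>s. C * g s)" using g by auto
    have "(\<lambda>s. indicator {a..b} s *\<^sub>R g s) \<in> borel_measurable lborel"
      using g unfolding set_integrable_def by (rule borel_measurable_integrable)
    moreover have "(\<lambda>s. indicator {a..b} s *\<^sub>R \<phi> s) \<in> borel_measurable lborel"
      using borel_measurable_continuous_on_indicator[OF _ \<phi>] by simp
    ultimately have "(\<lambda>s. (indicator {a..b} s *\<^sub>R \<phi> s) * (indicator {a..b} s *\<^sub>R g s)) \<in> borel_measurable lborel"
      by (rule borel_measurable_times[rotated])
    moreover have "(\<lambda>s. (indicator {a..b} s *\<^sub>R \<phi> s) * (indicator {a..b} s *\<^sub>R g s))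
        = (\<lambda>s. indicator {a..b} s *\<^sub>R (\<phi> s * g s))"
      by (auto simp: indicator_def fun_eq_iff)
    ultimately show "set_borel_measurable lborel {a..b} (\<lambda>s. \<phi> s * g s)"
      unfolding set_borel_measurable_def by simp
    show "AE x in lborel. x \<in> {a..b} \<longrightarrow> norm (\<phi> x * g x) \<le> norm (C * g x)"
    proof (intro AE_I2 impI)
      fix x assume "x \<in> {a..b}"
      then have "\<bar>\<phi> x\<bar> \<le> C" by (rule C)
      then show "norm (\<phi> x * g x) \<le> norm (C * g x)"
        by (simp add: abs_mult mult_right_mono)
    qed
  qed
qed

lemma set_integral_pos_Icc:
  fixes g :: "real \<Rightarrow> real"
  assumes g: "set_integrable lborel {a..b} g" and "a < b"
    and nonneg: "\<And>x. x \<in> {a..b} \<Longrightarrow> 0 \<le> g x" and pos: "\<And>x. x \<in> {a<..b} \<Longrightarrow> 0 < g x"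
  shows "0 < (LINT x:{a..b}|lborel. g x)"
proof -
  have int: "integrable lborel (\<lambda>x. indicator {a..b} x * g x)"
    using g unfolding set_integrable_def by simp
  have ae: "AE x in lborel. 0 \<le> indicator {a..b} x * g x"
    using nonneg by (auto simp: indicator_def)
  have "(LINT x:{a..b}|lborel. g x) \<noteq> 0"
  proof
    assume "(LINT x:{a..b}|lborel. g x) = 0"
    then have "AE x in lborel. indicator {a..b} x * g x = 0"
      using integral_nonneg_eq_0_iff_AE[OF int ae] unfolding set_lebesgue_integral_def by simp
    then have "AE x in lborel. x \<notin> {a<..b}"
      by eventually_elim (use pos in \<open>force simp: indicator_def\<close>)
    then have "emeasure lborel {a<..b} = 0"
      by (subst (asm) AE_iff_measurable[of "{a<..b}"]) auto
    with \<open>a < b\<close> show False by simp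
  qed
  moreover have "0 \<le> (LINT x:{a..b}|lborel. g x)"
    unfolding set_lebesgue_integral_def using ae by (simp add: integral_nonneg_AE)
  ultimately show ?thesis by linarith
qed

lemma set_integral_FTC:
  assumes "a \<le> b" and "\<And>t. (\<phi> has_real_derivative \<phi>' t) (at t)" and "continuous_on {a..b} \<phi>'"
  shows "(LINT t:{a..b}|lborel. \<phi>' t) = \<phi> b - \<phi> a"
  unfolding set_lebesgue_integral_def
  using assms
  by (intro integral_FTC_atLeastAtMost)
     (auto simp: has_real_derivative_iff_has_vector_derivative[symmetric] has_field_derivative_at_within)

lemma integral_small_on_short_intervals:
  fixes R :: "real \<Rightarrow> real"
  assumes R: "set_integrable lborel {0..T} R" and "e > 0"
  obtains d where "d > 0" "\<And>a b. 0 \<le> a \<Longrightarrow> a \<le> b \<Longrightarrow> b \<le> T \<Longrightarrow> b - a \<le> d \<Longrightarrow> integral {a..b} R \<le> e"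
proof (cases "0 \<le> T")
  case False
  then show ?thesis using that[of 1] by fastforce
next
  case True
  have "uniformly_continuous_on {0..T} (\<lambda>x. integral {0..x} R)"
    by (intro compact_uniformly_continuous indefinite_integral_continuous_1
        set_borel_integral_eq_integral_subinterval(1)[OF R]) auto
  then obtain d where "d > 0" and d: "\<And>x x'. x \<in> {0..T} \<Longrightarrow> x' \<in> {0..T} \<Longrightarrow> dist x' x < d \<Longrightarrow>
      dist (integral {0..x'} R) (integral {0..x} R) < e"
    unfolding uniformly_continuous_on_def using \<open>e > 0\<close> by metis
  show ?thesis
  proof (rule that[of "d/2"])
    show "d / 2 > 0" using \<open>d > 0\<close> by simp
    fix a b assume ab: "0 \<le> a" "a \<le> b" "b \<le> T" "b - a \<le> d / 2"
    have "R integrable_on {0..b}"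
      using set_borel_integral_eq_integral_subinterval(1)[OF R] ab by auto
    then have "integral {0..a} R + integral {a..b} R = integral {0..b} R"
      using Henstock_Kurzweil_Integration.integral_combine ab(1,2) by blast
    moreover have "dist (integral {0..b} R) (integral {0..a} R) < e"
      using d[of a b] ab \<open>d > 0\<close> by (auto simp: dist_real_def)
    ultimately show "integral {a..b} R \<le> e" by (simp add: dist_real_def)
  qed
qed

lemma interval_step_induct:
  fixes d T :: real
  assumes "0 < d" and "P 0"
    and step: "\<And>a t. 0 \<le> a \<Longrightarrow> a \<le> t \<Longrightarrow> t \<le> T \<Longrightarrow> t - a \<le> d \<Longrightarrow> P a \<Longrightarrow> P t"
    and "t \<in> {0..T}"
  shows "P t"
proof -
  have "\<forall>t\<in>{0..T}. t \<le> real n * d \<longrightarrow> P t" for n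
  proof (induction n)
    case 0
    then show ?case using \<open>P 0\<close> by auto
  next
    case (Suc n)
    show ?case
    proof (intro ballI impI)
      fix t assume t: "t \<in> {0..T}" "t \<le> real (Suc n) * d"
      show "P t"
      proof (cases "t \<le> real n * d")
        case True
        then show ?thesis using Suc.IH t by blast
      next
        case False
        then show ?thesis
          using step[of "real n * d" t] Suc.IH t \<open>0 < d\<close> by (auto simp: algebra_simps)
      qed
    qed
  qed
  moreover obtain n where "t < real n * d"
    using ex_less_of_nat_mult[OF \<open>0 < d\<close>] by blast
  ultimately show ?thesis using \<open>t \<in> {0..T}\<close> less_imp_le by blast
qed

lemma continuous_on_indefinite_set_integral:
  fixes g :: "real \<Rightarrow> real"
  assumes g: "set_integrable lborel {0..T} g"
  shows "continuous_on {0..T} (\<lambda>t. LINT s:{0..t}|lborel. g s)"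
  using indefinite_integral_continuous_1[OF set_borel_integral_eq_integral_subinterval(1)[OF g order.refl order.refl]]
  by (rule continuous_on_eq) (use set_borel_integral_eq_integral_subinterval(2)[OF g] in auto)

lemma AE_eq_0_if_integral_greaterThan_eq_0:
  fixes k :: "real \<Rightarrow> real"
  assumes k: "integrable lborel k" and zero: "\<And>x. (LINT s:{x<..}|lborel. k s) = 0"
  shows "AE s in lborel. k s = 0"
proof -
  define kp where "kp s = max 0 (k s)" for s
  define kn where "kn s = max 0 (- k s)" for s
  have int: "integrable lborel kp" "integrable lborel kn"
    unfolding kp_def kn_def using k by (auto intro!: integrable_max)
  have [measurable]: "k \<in> borel_measurable borel"
    using borel_measurable_integrable[OF k] by simp
  have [measurable]: "kp \<in> borel_measurable borel" "kn \<in> borel_measurable borel"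
    unfolding kp_def kn_def by auto
  have emeasure_eq: "emeasure (density lborel f) {x<..} = ennreal (LINT s:{x<..}|lborel. f s)"
    if "integrable lborel f" "\<And>s. f s \<ge> 0" "f \<in> borel_measurable borel" for f :: "real \<Rightarrow> real" and x
  proof -
    have "emeasure (density lborel f) {x<..} = (\<integral>\<^sup>+ s. ennreal (indicator {x<..} s * f s) \<partial>lborel)"
      using that by (subst emeasure_density) (auto intro!: nn_integral_cong simp: indicator_def)
    also have "\<dots> = ennreal (LINT s|lborel. indicator {x<..} s * f s)"
      using that by (intro nn_integral_eq_integral) (auto intro!: integrable_mult_indicator[where 'b=real, simplified])
    finally show ?thesis by (simp add: set_lebesgue_integral_def)
  qed
  (* The positive and negative parts of k have equal integrals over every half-line. *)
  have "density lborel kp = density lborel kn"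
  proof (rule measure_eqI_lessThan)
    fix x :: real
    have "set_integrable lborel {x<..} kp" "set_integrable lborel {x<..} kn"
      using int unfolding set_integrable_def by (auto intro!: integrable_mult_indicator[where 'b=real, simplified])
    then have "(LINT s:{x<..}|lborel. kp s) - (LINT s:{x<..}|lborel. kn s) = (LINT s:{x<..}|lborel. kp s - kn s)"
      by (simp add: set_integral_diff)
    also have "\<dots> = (LINT s:{x<..}|lborel. k s)"
      unfolding kp_def kn_def by (rule set_lebesgue_integral_cong) auto
    finally have "(LINT s:{x<..}|lborel. kp s) - (LINT s:{x<..}|lborel. kn s) = (LINT s:{x<..}|lborel. k s)" .
    then show "emeasure (density lborel kp) {x<..} = emeasure (density lborel kn) {x<..}"
      using emeasure_eq[OF int(1)] emeasure_eq[OF int(2)] zero[of x] by (simp add: kp_def kn_def)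
    show "emeasure (density lborel kp) {x<..} < \<infinity>"
      using emeasure_eq[OF int(1), of x] by (simp add: kp_def)
  qed auto
  then have "AE s in lborel. ennreal (kp s) = ennreal (kn s)"
    by (intro sigma_finite_measure.density_unique[OF sigma_finite_lborel]) auto
  then show ?thesis
    by eventually_elim (auto simp: kp_def kn_def max_def split: if_splits)
qed

lemma AE_eq_0_if_indefinite_integral_eq_0:
  fixes k :: "real \<Rightarrow> real"
  assumes k: "set_integrable lborel {0..T} k"
    and zero: "\<And>t. t \<in> {0..T} \<Longrightarrow> (LINT s:{0..t}|lborel. k s) = 0"
  shows "AE s in lborel. s \<in> {0..T} \<longrightarrow> k s = 0"
proof -
  define k0 where "k0 s = indicator {0..T} s * k s" for s
  have "(LINT s:{x<..}|lborel. k0 s) = 0" for x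
  proof -
    consider "x < 0" | "T \<le> x" | "0 \<le> x" "x < T" by linarith
    then show ?thesis
    proof cases
      case 1
      then have "(LINT s:{x<..}|lborel. k0 s) = (LINT s:{0..T}|lborel. k s)"
        unfolding set_lebesgue_integral_def k0_def
        by (intro Bochner_Integration.integral_cong) (auto simp: indicator_def)
      then show ?thesis
        using zero[of T] by (cases "0 \<le> T") (auto simp: set_lebesgue_integral_def)
    next
      case 2
      then have "(LINT s:{x<..}|lborel. k0 s) = (LINT s:{x<..}|lborel. 0)"
        unfolding set_lebesgue_integral_def k0_def
        by (intro Bochner_Integration.integral_cong) (auto simp: indicator_def)
      then show ?thesis by simp
    next
      case 3
      have "{0..T} = {0..x} \<union> {x<..T}" "{0..x} \<inter> {x<..T} = {}" using 3 by auto
      then have "(LINT s:{0..T}|lborel. k s) = (LINT s:{0..x}|lborel. k s) + (LINT s:{x<..T}|lborel. k s)"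
        using set_integral_Un[of "{0..x}" "{x<..T}" lborel k] 3
          set_integrable_subset[OF k, of "{0..x}"] set_integrable_subset[OF k, of "{x<..T}"] by auto
      moreover have "(LINT s:{x<..}|lborel. k0 s) = (LINT s:{x<..T}|lborel. k s)"
        unfolding set_lebesgue_integral_def k0_def
        by (intro Bochner_Integration.integral_cong) (use 3 in \<open>auto simp: indicator_def\<close>)
      ultimately show ?thesis using zero[of T] zero[of x] 3 by auto
    qed
  qed
  moreover have "integrable lborel k0"
    using k unfolding k0_def set_integrable_def by simp
  ultimately have "AE s in lborel. k0 s = 0"
    by (intro AE_eq_0_if_integral_greaterThan_eq_0)
  then show ?thesis by eventually_elim (auto simp: k0_def)
qed

section \<open>Integration by parts against an indefinite integral\<close>

lemma integrable_lower_triangle: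
  fixes g h :: "real \<Rightarrow> real"
  assumes g: "integrable lborel g" and [measurable]: "h \<in> borel_measurable borel"
    and bound: "\<And>t. t \<in> {0..T} \<Longrightarrow> \<bar>h t\<bar> \<le> C"
  shows "integrable (lborel \<Otimes>\<^sub>M lborel) (\<lambda>(t, s). indicator {0..T} t * h t * (indicator {..t} s * g s))"
    (is "integrable _ (case_prod ?F)")
proof -
  have [measurable]: "g \<in> borel_measurable borel"
    using borel_measurable_integrable[OF g] by simp
  have [measurable]: "Measurable.pred (lborel \<Otimes>\<^sub>M lborel) (\<lambda>x::real \<times> real. snd x \<in> {..fst x})"
    unfolding atMost_iff by measurable
  have ind: "integrable lborel (\<lambda>s. indicator {..t} s * g s)" for t
    using integrable_mult_indicator[OF _ g, of "{..t}"] by simp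
  show ?thesis
  proof (rule lborel_pair.Fubini_integrable, unfold case_prod_conv)
    show "case_prod ?F \<in> borel_measurable (lborel \<Otimes>\<^sub>M lborel)" by measurable
    show "AE t in lborel. integrable lborel (\<lambda>s. ?F t s)"
      using ind by (simp add: mult.assoc)
    show "integrable lborel (\<lambda>t. \<integral>s. norm (?F t s) \<partial>lborel)"
    proof (rule Bochner_Integration.integrable_bound)
      show "integrable lborel (\<lambda>t. indicator {0..T} t * (C * (\<integral>s. norm (g s) \<partial>lborel)))"
        by (rule integrable_mult_left) (simp add: emeasure_lborel_Icc_eq)
      show "(\<lambda>t. \<integral>s. norm (?F t s) \<partial>lborel) \<in> borel_measurable lborel"
        by (rule lborel.borel_measurable_lebesgue_integral) measurable
      show "AE t in lborel. norm (\<integral>s. norm (?F t s) \<partial>lborel)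
          \<le> norm (indicator {0..T} t * (C * (\<integral>s. norm (g s) \<partial>lborel)))"
      proof (intro AE_I2)
        fix t
        show "norm (\<integral>s. norm (?F t s) \<partial>lborel) \<le> norm (indicator {0..T} t * (C * (\<integral>s. norm (g s) \<partial>lborel)))"
        proof (cases "t \<in> {0..T}")
          case True
          have "(\<integral>s. norm (?F t s) \<partial>lborel) \<le> (\<integral>s. C * norm (g s) \<partial>lborel)"
          proof (rule integral_mono)
            show "integrable lborel (\<lambda>s. norm (?F t s))"
              using integrable_norm[OF ind[of t]] by (simp add: abs_mult)
            show "norm (?F t s) \<le> C * norm (g s)" for s
              using bound[OF True] by (auto simp: abs_mult indicator_def intro!: mult_right_mono)
          qed (use g in auto)
          moreover have "0 \<le> C" using bound[OF True] by linarith
          ultimately show ?thesis using True by (simp add: integral_nonneg_AE)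
        qed simp
      qed
    qed
  qed
qed

lemma set_integral_lower_triangle_swap:
  fixes g h :: "real \<Rightarrow> real"
  assumes g: "set_integrable lborel {0..T} g" and h: "continuous_on {0..T} h"
  shows "(LINT t:{0..T}|lborel. h t * (LINT s:{0..t}|lborel. g s))
       = (LINT s:{0..T}|lborel. g s * (LINT t:{s..T}|lborel. h t))"
proof -
  define g0 where "g0 s = indicator {0..T} s * g s" for s
  define h0 where "h0 t = indicator {0..T} t * h t" for t
  define F where "F t s = indicator {0..T} t * h0 t * (indicator {..t} s * g0 s)" for t s
  have g0: "integrable lborel g0" using g unfolding g0_def set_integrable_def by simp
  have [measurable]: "h0 \<in> borel_measurable borel"
    using borel_measurable_continuous_on_indicator[OF _ h] by (simp add: h0_def[abs_def])
  obtain C where C: "\<And>t. t \<in> {0..T} \<Longrightarrow> \<bar>h0 t\<bar> \<le> C"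
    using compact_continuous_image[OF h compact_Icc]
    by (metis bounded_iff compact_imp_bounded image_eqI real_norm_def h0_def indicator_simps(1) mult_1)
  have "integrable (lborel \<Otimes>\<^sub>M lborel) (case_prod F)"
    using integrable_lower_triangle[OF g0 _ C] unfolding F_def[abs_def] by simp
  then have "(\<integral>s. (\<integral>t. F t s \<partial>lborel) \<partial>lborel) = (\<integral>t. (\<integral>s. F t s \<partial>lborel) \<partial>lborel)"
    by (rule lborel_pair.Fubini_integral)
  moreover have "(\<integral>t. (\<integral>s. F t s \<partial>lborel) \<partial>lborel) = (LINT t:{0..T}|lborel. h t * (LINT s:{0..t}|lborel. g s))"
    unfolding set_lebesgue_integral_def[of lborel "{0..T}"]
  proof (intro Bochner_Integration.integral_cong refl)
    fix t
    show "(\<integral>s. F t s \<partial>lborel) = indicator {0..T} t *\<^sub>R (h t * (LINT s:{0..t}|lborel. g s))"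
    proof (cases "t \<in> {0..T}")
      case True
      then have "(\<integral>s. F t s \<partial>lborel) = (\<integral>s. h t * (indicator {0..t} s * g s) \<partial>lborel)"
        unfolding F_def g0_def h0_def
        by (intro Bochner_Integration.integral_cong) (auto simp: indicator_def)
      then show ?thesis using True by (simp add: set_lebesgue_integral_def)
    qed (simp add: F_def)
  qed
  moreover have "(\<integral>s. (\<integral>t. F t s \<partial>lborel) \<partial>lborel) = (LINT s:{0..T}|lborel. g s * (LINT t:{s..T}|lborel. h t))"
    unfolding set_lebesgue_integral_def[of lborel "{0..T}"]
  proof (intro Bochner_Integration.integral_cong refl)
    fix s
    show "(\<integral>t. F t s \<partial>lborel) = indicator {0..T} s *\<^sub>R (g s * (LINT t:{s..T}|lborel. h t))"
    proof (cases "s \<in> {0..T}")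
      case True
      then have "(\<integral>t. F t s \<partial>lborel) = (\<integral>t. g s * (indicator {s..T} t * h t) \<partial>lborel)"
        unfolding F_def g0_def h0_def
        by (intro Bochner_Integration.integral_cong) (auto simp: indicator_def)
      then show ?thesis using True by (simp add: set_lebesgue_integral_def)
    qed (simp add: F_def g0_def)
  qed
  ultimately show ?thesis by simp
qed

lemma set_integral_by_parts_indefinite:
  fixes g \<phi> \<phi>' :: "real \<Rightarrow> real"
  assumes g: "set_integrable lborel {0..T} g" and "0 \<le> T"
    and \<phi>: "\<And>t. (\<phi> has_real_derivative \<phi>' t) (at t)" and \<phi>': "continuous_on UNIV \<phi>'"
  shows "(LINT t:{0..T}|lborel. g t * \<phi> t)
       = (LINT s:{0..T}|lborel. g s) * \<phi> T - (LINT t:{0..T}|lborel. \<phi>' t * (LINT s:{0..t}|lborel. g s))"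
proof -
  have cont: "continuous_on A \<phi>'" "continuous_on A \<phi>" for A
    using \<phi>' \<phi> by (auto intro: continuous_on_subset DERIV_isCont continuous_at_imp_continuous_on)
  have "(LINT t:{0..T}|lborel. \<phi>' t * (LINT s:{0..t}|lborel. g s))
      = (LINT s:{0..T}|lborel. g s * (LINT t:{s..T}|lborel. \<phi>' t))"
    by (rule set_integral_lower_triangle_swap[OF g cont(1)])
  also have "\<dots> = (LINT s:{0..T}|lborel. g s * \<phi> T - g s * \<phi> s)"
    by (intro set_lebesgue_integral_cong) (auto simp: set_integral_FTC[OF _ \<phi> cont(1)] algebra_simps)
  also have "\<dots> = (LINT s:{0..T}|lborel. g s) * \<phi> T - (LINT t:{0..T}|lborel. g t * \<phi> t)"
    using set_integrable_continuous_mult[OF g cont(2)] g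
    by (simp add: set_integral_diff mult.commute)
  finally show ?thesis by simp
qed

section \<open>Periodic test functions and the du Bois-Reymond lemma\<close>

definition periodic_extension :: "real \<Rightarrow> (real \<Rightarrow> real) \<Rightarrow> real \<Rightarrow> real" where
  "periodic_extension T f t = f (T * frac (t / T))"

lemma periodic_extension_periodic:
  assumes "T > 0"
  shows "periodic_extension T f (t + T) = periodic_extension T f t"
proof -
  have "(t + T) / T = t / T + 1" using assms by (simp add: field_simps)
  then show ?thesis
    unfolding periodic_extension_def using frac_add_of_int_right[of "t / T" 1] by simp
qed

lemma periodic_extension_eq_shift:
  assumes "T > 0" and "f 0 = f T" and t: "t \<in> {of_int n * T..(of_int n + 1) * T}"
  shows "periodic_extension T f t = f (t - of_int n * T)"
proof (cases "t = (of_int n + 1) * T")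
  case True
  then have "t / T = of_int (n + 1)" using assms by (simp add: field_simps)
  then show ?thesis unfolding periodic_extension_def using True assms by (simp add: algebra_simps)
next
  case False
  then have "of_int n \<le> t / T" "t / T < of_int n + 1" using t assms by (auto simp: field_simps)
  then have "\<lfloor>t / T\<rfloor> = n" by linarith
  then show ?thesis unfolding periodic_extension_def frac_def using assms by (simp add: algebra_simps)
qed

lemma periodic_extension_eq:
  "T > 0 \<Longrightarrow> f 0 = f T \<Longrightarrow> t \<in> {0..T} \<Longrightarrow> periodic_extension T f t = f t"
  using periodic_extension_eq_shift[of T f t 0] by simp

lemma continuous_on_periodic_extension:
  assumes T: "T > 0" and "f 0 = f T" and f: "continuous_on {0..T} f"
  shows "continuous_on UNIV (periodic_extension T f)"
proof -
  define I where "I n = {of_int n * T..(of_int n + 1) * T}" for n :: int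
  have cont_I: "continuous_on (I n) (periodic_extension T f)" for n
  proof -
    have "continuous_on (I n) (\<lambda>t. f (t - of_int n * T))"
      by (rule continuous_on_compose2[OF f]) (auto simp: I_def algebra_simps intro!: continuous_intros)
    then show ?thesis
      by (rule continuous_on_eq) (use periodic_extension_eq_shift[OF T \<open>f 0 = f T\<close>] in \<open>auto simp: I_def\<close>)
  qed
  have "isCont (periodic_extension T f) t" for t
  proof -
    define n where "n = \<lfloor>t / T\<rfloor>"
    have "of_int n \<le> t / T" "t / T < of_int n + 1" unfolding n_def by linarith+
    then have "t \<in> {of_int (n - 1) * T<..<(of_int n + 1) * T}" using T by (auto simp: field_simps)
    moreover have "{of_int (n - 1) * T<..<(of_int n + 1) * T} \<subseteq> I (n - 1) \<union> I n"
      by (auto simp: I_def algebra_simps)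
    ultimately have "t \<in> interior (I (n - 1) \<union> I n)"
      using interior_maximal[OF _ open_greaterThanLessThan] by blast
    moreover have "continuous_on (I (n - 1) \<union> I n) (periodic_extension T f)"
      by (intro continuous_on_closed_Un cont_I) (auto simp: I_def)
    ultimately show ?thesis using continuous_on_interior by blast
  qed
  then show ?thesis by (simp add: continuous_at_imp_continuous_on)
qed

lemma oriented_integral_eq_shift:
  fixes g :: "real \<Rightarrow> real"
  assumes g: "continuous_on UNIV g" and "a \<le> 0" "a \<le> x"
  shows "integral {0..x} g - integral {x..0} g = integral {a..x} g - integral {a..0} g"
proof -
  have int: "g integrable_on {u..v}" for u v
    by (rule integrable_continuous_real) (rule continuous_on_subset[OF g], simp)
  show ?thesis
  proof (cases "0 \<le> x")
    case True
    then show ?thesis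
      using Henstock_Kurzweil_Integration.integral_combine[OF \<open>a \<le> 0\<close> True int]
      by (cases "x = 0") auto
  next
    case False
    then show ?thesis
      using Henstock_Kurzweil_Integration.integral_combine[OF \<open>a \<le> x\<close> _ int, of 0] by simp
  qed
qed

lemma exists_primitive:
  fixes g :: "real \<Rightarrow> real"
  assumes g: "continuous_on UNIV g"
  obtains G where "\<And>t. (G has_real_derivative g t) (at t)"
proof -
  have "((\<lambda>x. integral {0..x} g - integral {x..0} g) has_real_derivative g t) (at t)" for t
  proof -
    define a where "a = - \<bar>t\<bar> - 1"
    define b where "b = \<bar>t\<bar> + 1"
    have "((\<lambda>x. integral {a..x} g) has_real_derivative g t) (at t within {a..b})"
      by (rule integral_has_real_derivative[OF continuous_on_subset[OF g]])
        (auto simp: a_def b_def abs_if)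
    moreover have "t \<in> interior {a..b}" unfolding a_def b_def by (simp add: abs_if)
    ultimately have "((\<lambda>x. integral {a..x} g) has_real_derivative g t) (at t)"
      using at_within_interior by metis
    then have "((\<lambda>x. integral {a..x} g - integral {a..0} g) has_real_derivative g t - 0) (at t)"
      by (rule DERIV_diff) (rule DERIV_const)
    then have "((\<lambda>x. integral {a..x} g - integral {a..0} g) has_real_derivative g t) (at t)"
      by simp
    then show ?thesis
    proof (rule has_field_derivative_transform_within_open[of _ _ _ "{a<..}"], simp_all)
      show "a < t" by (simp add: a_def abs_if)
      show "integral {a..x} g - integral {a..0} g = integral {0..x} g - integral {x..0} g" if "a < x" for x
        using oriented_integral_eq_shift[OF g, of a x] that by (simp add: a_def)
    qed
  qed
  then show ?thesis by (rule that)
qed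

lemma exists_periodic_primitive_zero_mean:
  fixes g :: "real \<Rightarrow> real"
  assumes T: "T > 0" and g: "continuous_on UNIV g"
    and periodic: "\<And>t. g (t + T) = g t" and mean: "integral {0..T} g = 0"
  obtains G where "\<And>t. (G has_real_derivative g t) (at t)" "\<And>t. G (t + T) = G t" "integral {0..T} G = 0"
proof -
  obtain G0 where G0: "\<And>t. (G0 has_real_derivative g t) (at t)"
    using exists_primitive[OF g] by blast
  have "((\<lambda>t. G0 (t + T) - G0 t) has_real_derivative g (x + T) - g x) (at x)" for x
    using DERIV_diff[OF DERIV_chain2[OF G0 DERIV_add[OF DERIV_ident DERIV_const[of T]]] G0] by simp
  then have "((\<lambda>t. G0 (t + T) - G0 t) has_real_derivative 0) (at x)" for x
    using periodic by simp
  then have "G0 (t + T) - G0 t = G0 (0 + T) - G0 0" for t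
    using DERIV_isconst_all by blast
  moreover have "G0 T - G0 0 = integral {0..T} g"
    using T G0 by (intro integral_unique[symmetric] fundamental_theorem_of_calculus)
      (auto simp: has_real_derivative_iff_has_vector_derivative[symmetric] has_field_derivative_at_within)
  ultimately have G0_periodic: "G0 (t + T) = G0 t" for t using mean by simp
  define G where "G t = G0 t - integral {0..T} G0 / T" for t
  have "continuous_on {0..T} G0"
    using G0 by (meson DERIV_isCont continuous_at_imp_continuous_on)
  then have "integral {0..T} G = 0"
    unfolding G_def using T by (subst integral_diff) (auto intro: integrable_continuous_real)
  moreover have "(G has_real_derivative g t) (at t)" for t
    unfolding G_def using DERIV_diff[OF G0 DERIV_const] by simp
  moreover have "G (t + T) = G t" for t
    using G0_periodic by (simp add: G_def)
  ultimately show ?thesis using that by blast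
qed

lemma exists_periodic_second_primitive:
  fixes c :: "real \<Rightarrow> real"
  assumes T: "T > 0" and c: "continuous_on {0..T} c" and "c 0 = c T" and mean: "integral {0..T} c = 0"
  obtains \<phi> \<phi>' \<phi>'' where "\<And>t. (\<phi> has_real_derivative \<phi>' t) (at t)" "\<And>t. (\<phi>' has_real_derivative \<phi>'' t) (at t)"
    "continuous_on UNIV \<phi>''" "\<And>t. \<phi> (t + T) = \<phi> t" "\<And>t. t \<in> {0..T} \<Longrightarrow> \<phi>'' t = c t"
proof -
  define \<phi>'' where "\<phi>'' = periodic_extension T c"
  have \<phi>''_eq: "\<phi>'' t = c t" if "t \<in> {0..T}" for t
    unfolding \<phi>''_def using periodic_extension_eq[OF T \<open>c 0 = c T\<close> that] .
  have \<phi>''_cont: "continuous_on UNIV \<phi>''"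
    unfolding \<phi>''_def by (rule continuous_on_periodic_extension[OF T \<open>c 0 = c T\<close> c])
  have "integral {0..T} \<phi>'' = integral {0..T} c"
    by (rule integral_cong) (rule \<phi>''_eq)
  with mean have "integral {0..T} \<phi>'' = 0" by simp
  then obtain \<phi>' where \<phi>': "\<And>t. (\<phi>' has_real_derivative \<phi>'' t) (at t)" "\<And>t. \<phi>' (t + T) = \<phi>' t"
    and "integral {0..T} \<phi>' = 0"
    using exists_periodic_primitive_zero_mean[OF T \<phi>''_cont] periodic_extension_periodic[OF T]
    unfolding \<phi>''_def by metis
  moreover have "continuous_on UNIV \<phi>'"
    using \<phi>'(1) by (meson DERIV_isCont continuous_at_imp_continuous_on)
  ultimately obtain \<phi> where "\<And>t. (\<phi> has_real_derivative \<phi>' t) (at t)" "\<And>t. \<phi> (t + T) = \<phi> t"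
    using exists_periodic_primitive_zero_mean[OF T] by metis
  then show ?thesis using that \<phi>'(1) \<phi>''_cont \<phi>''_eq by blast
qed

lemma continuous_eq_0_if_orthogonal_to_periodic_second_derivatives:
  fixes K :: "real \<Rightarrow> real"
  assumes T: "T > 0" and K: "continuous_on {0..T} K" and "K 0 = 0" "K T = 0"
    and orth: "\<And>\<phi> \<phi>' \<phi>''. (\<And>t. (\<phi> has_real_derivative \<phi>' t) (at t)) \<Longrightarrow>
      (\<And>t. (\<phi>' has_real_derivative \<phi>'' t) (at t)) \<Longrightarrow> continuous_on UNIV \<phi>'' \<Longrightarrow>
      (\<And>t. \<phi> (t + T) = \<phi> t) \<Longrightarrow> integral {0..T} (\<lambda>t. \<phi>'' t * K t) = 0"
    and t: "t \<in> {0..T}"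
  shows "K t = 0"
proof -
  define m where "m = integral {0..T} K / T"
  define c where "c t = K t - m" for t
  have c_cont: "continuous_on {0..T} c" unfolding c_def using K by (intro continuous_intros)
  have c_mean: "integral {0..T} c = 0"
    unfolding c_def using T K by (subst integral_diff) (auto intro: integrable_continuous_real simp: m_def)
  (* Test with \<phi>'' = K minus its mean m: orthogonality becomes \<integral> (K - m)\<^sup>2 = 0. *)
  obtain \<phi> \<phi>' \<phi>'' where
    derivs: "\<And>t. (\<phi> has_real_derivative \<phi>' t) (at t)" "\<And>t. (\<phi>' has_real_derivative \<phi>'' t) (at t)"
    and "continuous_on UNIV \<phi>''" "\<And>t. \<phi> (t + T) = \<phi> t" and \<phi>''_eq: "\<And>t. t \<in> {0..T} \<Longrightarrow> \<phi>'' t = c t"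
    using exists_periodic_second_primitive[OF T c_cont _ c_mean] \<open>K 0 = 0\<close> \<open>K T = 0\<close> c_def by metis
  then have "integral {0..T} (\<lambda>t. \<phi>'' t * K t) = 0" by (intro orth[OF derivs])
  moreover have "integral {0..T} (\<lambda>t. \<phi>'' t * K t) = integral {0..T} (\<lambda>t. c t * c t + m * c t)"
    by (rule integral_cong) (simp add: \<phi>''_eq c_def algebra_simps)
  moreover have "\<dots> = integral {0..T} (\<lambda>t. c t * c t) + m * integral {0..T} c"
    using c_cont by (subst integral_add) (auto intro!: integrable_continuous_real continuous_intros)
  ultimately have "integral {0..T} (\<lambda>t. c t * c t) = 0" using c_mean by simp
  moreover have "continuous_on {0..T} (\<lambda>t. c t * c t)"
    using c_cont by (intro continuous_intros)
  ultimately have c_0: "c t = 0" if "t \<in> {0..T}" for t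
    using integral_eq_0_iff[of 0 T "\<lambda>t. c t * c t"] T that by simp
  then have "m = 0" using \<open>K 0 = 0\<close> T by (simp add: c_def)
  then show ?thesis using c_0[OF t] by (simp add: c_def)
qed

lemma AE_eq_0_if_orthogonal_to_periodic_derivatives:
  fixes k :: "real \<Rightarrow> real"
  assumes T: "T > 0" and k: "set_integrable lborel {0..T} k" and mean: "(LINT t:{0..T}|lborel. k t) = 0"
    and orth: "\<And>\<phi> \<phi>'. (\<And>t. (\<phi> has_real_derivative \<phi>' t) (at t)) \<Longrightarrow> continuous_on UNIV \<phi>' \<Longrightarrow>
      (\<And>t. \<phi> (t + T) = \<phi> t) \<Longrightarrow> (LINT t:{0..T}|lborel. k t * \<phi>' t) = 0"
  shows "AE t in lborel. t \<in> {0..T} \<longrightarrow> k t = 0"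
proof (rule AE_eq_0_if_indefinite_integral_eq_0[OF k])
  define K where "K t = (LINT s:{0..t}|lborel. k s)" for t
  have K_cont: "continuous_on {0..T} K"
    unfolding K_def by (rule continuous_on_indefinite_set_integral[OF k])
  fix t assume "t \<in> {0..T}"
  have "K t = 0"
  proof (rule continuous_eq_0_if_orthogonal_to_periodic_second_derivatives[OF T K_cont _ _ _ \<open>t \<in> {0..T}\<close>])
    show "K 0 = 0" unfolding K_def by (rule set_integral_degenerate_interval)
    show "K T = 0" using mean by (simp add: K_def)
    fix \<phi> \<phi>' \<phi>'' assume \<phi>: "\<And>t. (\<phi> has_real_derivative \<phi>' t) (at t)"
      and \<phi>': "\<And>t. (\<phi>' has_real_derivative \<phi>'' t) (at t)" and \<phi>'': "continuous_on UNIV \<phi>''"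
      and periodic: "\<And>t. \<phi> (t + T) = \<phi> t"
    have "continuous_on UNIV \<phi>'"
      using \<phi>' by (meson DERIV_isCont continuous_at_imp_continuous_on)
    then have "0 = (LINT t:{0..T}|lborel. k t * \<phi>' t)"
      by (rule orth[OF \<phi> _ periodic, symmetric])
    also have "\<dots> = - (LINT t:{0..T}|lborel. \<phi>'' t * K t)"
      using set_integral_by_parts_indefinite[OF k _ \<phi>' \<phi>''] T mean by (simp add: K_def)
    also have "(LINT t:{0..T}|lborel. \<phi>'' t * K t) = integral {0..T} (\<lambda>t. \<phi>'' t * K t)"
      using K_cont continuous_on_subset[OF \<phi>'']
      by (intro set_borel_integral_eq_integral(2) borel_integrable_atLeastAtMost' continuous_intros) auto
    finally show "integral {0..T} (\<lambda>t. \<phi>'' t * K t) = 0" by simp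
  qed
  then show "(LINT s:{0..t}|lborel. k s) = 0" by (simp add: K_def)
qed

lemma AE_const_if_orthogonal_to_periodic_derivatives:
  fixes h :: "real \<Rightarrow> real"
  assumes T: "T > 0" and h: "set_integrable lborel {0..T} h"
    and orth: "\<And>\<phi> \<phi>'. (\<And>t. (\<phi> has_real_derivative \<phi>' t) (at t)) \<Longrightarrow> continuous_on UNIV \<phi>' \<Longrightarrow>
      (\<And>t. \<phi> (t + T) = \<phi> t) \<Longrightarrow> (LINT t:{0..T}|lborel. h t * \<phi>' t) = 0"
  shows "\<exists>c. AE t in lborel. t \<in> {0..T} \<longrightarrow> h t = c"
proof -
  define c where "c = (LINT t:{0..T}|lborel. h t) / T"
  have const: "set_integrable lborel {0..T} (\<lambda>t. c)" "(LINT t:{0..T}|lborel. c) = c * T"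
    using T by (simp_all add: set_integrable_def emeasure_lborel_Icc_eq set_integral_const)
  have k: "set_integrable lborel {0..T} (\<lambda>t. h t - c)"
    using h const(1) by (rule set_integral_diff)
  have "AE t in lborel. t \<in> {0..T} \<longrightarrow> h t - c = 0"
  proof (rule AE_eq_0_if_orthogonal_to_periodic_derivatives[OF T k])
    show "(LINT t:{0..T}|lborel. h t - c) = 0"
      using h const T by (simp add: set_integral_diff c_def)
    fix \<phi> \<phi>' assume \<phi>: "\<And>t. (\<phi> has_real_derivative \<phi>' t) (at t)" and \<phi>': "continuous_on UNIV \<phi>'"
      and periodic: "\<And>t. \<phi> (t + T) = \<phi> t"
    have \<phi>'_T: "continuous_on {0..T} \<phi>'" using \<phi>' by (rule continuous_on_subset) simp
    have "set_integrable lborel {0..T} (\<lambda>t. h t * \<phi>' t)"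
      using set_integrable_continuous_mult[OF h \<phi>'_T] by (simp add: mult.commute)
    moreover have "set_integrable lborel {0..T} (\<lambda>t. c * \<phi>' t)"
      using borel_integrable_atLeastAtMost'[OF \<phi>'_T] by simp
    ultimately have "(LINT t:{0..T}|lborel. (h t - c) * \<phi>' t)
        = (LINT t:{0..T}|lborel. h t * \<phi>' t) - c * (LINT t:{0..T}|lborel. \<phi>' t)"
      by (simp add: left_diff_distrib set_integral_diff)
    also have "(LINT t:{0..T}|lborel. \<phi>' t) = \<phi> T - \<phi> 0"
      using T by (intro set_integral_FTC[OF _ \<phi> \<phi>'_T]) simp
    finally show "(LINT t:{0..T}|lborel. (h t - c) * \<phi>' t) = 0"
      using orth[OF \<phi> \<phi>' periodic] periodic[of 0] by simp
  qed
  then show ?thesis by (auto elim!: eventually_mono)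
qed

section \<open>The generator and the forward equation\<close>

lemma rate_assms_period_pos: "rate_assms T0 r \<Longrightarrow> 0 < T0"
  unfolding rate_assms_def by blast

lemma rate_assms_nonneg: "rate_assms T0 r \<Longrightarrow> 0 \<le> t \<Longrightarrow> 0 \<le> r y z t"
  unfolding rate_assms_def by blast

lemma rate_assms_integrable: "rate_assms T0 r \<Longrightarrow> 0 \<le> b \<Longrightarrow> set_integrable lborel {0..b} (r y z)"
  unfolding rate_assms_def by blast

lemma gen_row_sum: "(\<Sum>z\<in>UNIV. gen r s y z) = 0"
  unfolding gen_def by (simp add: sum_subtractf)

lemma gen_off_diag: "y \<noteq> z \<Longrightarrow> gen r s y z = r y z s"
  unfolding gen_def by simp

lemma gen_off_diag_nonneg: "rate_assms T0 r \<Longrightarrow> 0 \<le> s \<Longrightarrow> y \<noteq> z \<Longrightarrow> 0 \<le> gen r s y z"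
  by (simp add: gen_off_diag rate_assms_nonneg)

lemma gen_diag_nonpos: "rate_assms T0 r \<Longrightarrow> 0 \<le> s \<Longrightarrow> gen r s z z \<le> 0"
  unfolding gen_def rate_assms_def by (simp add: sum_nonneg)

lemma set_integrable_gen:
  assumes "rate_assms T0 r" "0 \<le> b"
  shows "set_integrable lborel {0..b} (\<lambda>s. gen r s y z)"
proof (cases "y = z")
  case True
  then show ?thesis
    unfolding gen_def using rate_assms_integrable[OF assms]
    by (auto intro!: set_integral_diff set_integrable_sum)
qed (simp add: gen_def rate_assms_integrable[OF assms])

definition gen_norm :: "('v::finite \<Rightarrow> 'v \<Rightarrow> real \<Rightarrow> real) \<Rightarrow> real \<Rightarrow> real" where
  "gen_norm r s = (\<Sum>w\<in>UNIV. \<Sum>y\<in>UNIV. \<bar>gen r s w y\<bar>)"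

lemma gen_norm_nonneg: "0 \<le> gen_norm r s"
  unfolding gen_norm_def by (intro sum_nonneg) auto

lemma abs_gen_le_gen_norm: "\<bar>gen r s w y\<bar> \<le> gen_norm r s"
proof -
  have "\<bar>gen r s w y\<bar> \<le> (\<Sum>y\<in>UNIV. \<bar>gen r s w y\<bar>)"
    by (rule member_le_sum) auto
  also have "\<dots> \<le> gen_norm r s"
    unfolding gen_norm_def by (rule member_le_sum[of _ _ "\<lambda>w. \<Sum>y\<in>UNIV. \<bar>gen r s w y\<bar>"]) (auto intro: sum_nonneg)
  finally show ?thesis .
qed

lemma set_integrable_gen_norm:
  "rate_assms T0 r \<Longrightarrow> 0 \<le> b \<Longrightarrow> set_integrable lborel {0..b} (gen_norm r)"
  unfolding gen_norm_def by (intro set_integrable_sum set_integrable_abs set_integrable_gen) auto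

lemma gen_norm_integrable_on:
  "rate_assms T0 r \<Longrightarrow> 0 \<le> a \<Longrightarrow> 0 \<le> b \<Longrightarrow> gen_norm r integrable_on {a..b}"
  using set_borel_integral_eq_integral_subinterval(1)[OF set_integrable_gen_norm] by blast

lemma integral_gen_norm_mono:
  assumes "rate_assms T0 r" "0 \<le> a" "a \<le> c" "d \<le> b"
  shows "integral {c..d} (gen_norm r) \<le> integral {a..b} (gen_norm r)"
proof (cases "c \<le> d")
  case True
  then show ?thesis
    using assms by (intro integral_subset_le gen_norm_integrable_on) (auto simp: gen_norm_nonneg)
next
  case False
  then have "integral {c..d} (gen_norm r) = 0" by simp
  moreover have "0 \<le> integral {a..b} (gen_norm r)"
    using assms by (cases "a \<le> b") (auto intro!: integral_nonneg gen_norm_integrable_on gen_norm_nonneg)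
  ultimately show ?thesis by simp
qed

lemma gen_norm_integral_small_on_short_intervals:
  assumes ra: "rate_assms T0 r" and "0 \<le> T" "0 < e"
  obtains d where "d > 0"
    "\<And>a b. 0 \<le> a \<Longrightarrow> a \<le> b \<Longrightarrow> b \<le> T \<Longrightarrow> b - a \<le> d \<Longrightarrow> integral {a..b} (gen_norm r) \<le> e"
  using integral_small_on_short_intervals[OF set_integrable_gen_norm[OF ra \<open>0 \<le> T\<close>] \<open>0 < e\<close>] that
  by blast

definition forward_rhs ::
  "('v::finite \<Rightarrow> 'v \<Rightarrow> real \<Rightarrow> real) \<Rightarrow> (real \<Rightarrow> 'v \<Rightarrow> real) \<Rightarrow> real \<Rightarrow> 'v \<Rightarrow> real" where
  "forward_rhs r u s z = (\<Sum>y\<in>UNIV. u s y * gen r s y z)"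

lemma forward_rhs_ge_partial_sum:
  assumes "rate_assms T0 r" "0 \<le> s" "\<And>w. 0 \<le> u s w" "z \<in> S"
  shows "(\<Sum>w\<in>S. u s w * gen r s w z) \<le> forward_rhs r u s z"
  unfolding forward_rhs_def
proof (rule sum_mono2)
  fix w assume "w \<in> UNIV - S"
  then have "w \<noteq> z" using \<open>z \<in> S\<close> by blast
  then show "0 \<le> u s w * gen r s w z"
    using assms gen_off_diag_nonneg[OF assms(1,2)] by simp
qed auto

lemma forward_rhs_ge_neg_part:
  assumes ra: "rate_assms T0 r" and "0 \<le> s" and "u s y \<le> 0"
  shows "- (\<Sum>w\<in>UNIV. max 0 (- u s w)) * gen_norm r s \<le> forward_rhs r u s y"
proof -
  have "- max 0 (- u s w) * gen_norm r s \<le> u s w * gen r s w y" for w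
  proof (cases "w = y")
    case True
    then have "0 \<le> u s w * gen r s w y"
      using gen_diag_nonpos[OF ra \<open>0 \<le> s\<close>] \<open>u s y \<le> 0\<close> by (simp add: mult_nonpos_nonpos)
    moreover have "0 \<le> max 0 (- u s w) * gen_norm r s" by (simp add: gen_norm_nonneg)
    ultimately show ?thesis by linarith
  next
    case False
    have "- max 0 (- u s w) * gen_norm r s \<le> - max 0 (- u s w) * gen r s w y"
      using abs_gen_le_gen_norm[of r s w y] by (intro mult_left_mono_neg) auto
    also have "\<dots> \<le> u s w * gen r s w y"
      using gen_off_diag_nonneg[OF ra \<open>0 \<le> s\<close> False] by (intro mult_right_mono) auto
    finally show ?thesis .
  qed
  then have "(\<Sum>w\<in>UNIV. - max 0 (- u s w) * gen_norm r s) \<le> forward_rhs r u s y"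
    unfolding forward_rhs_def by (rule sum_mono)
  then show ?thesis by (simp add: sum_distrib_right sum_negf)
qed

definition forward_eq :: "real \<Rightarrow> ('v::finite \<Rightarrow> 'v \<Rightarrow> real \<Rightarrow> real) \<Rightarrow> (real \<Rightarrow> 'v \<Rightarrow> real) \<Rightarrow> bool" where
  "forward_eq T r u \<longleftrightarrow> (\<forall>z. set_integrable lborel {0..T} (\<lambda>s. forward_rhs r u s z))
     \<and> (\<forall>z t. t \<in> {0..T} \<longrightarrow> u t z = u 0 z + (LINT s:{0..t}|lborel. forward_rhs r u s z))"

lemma forward_eq_integrable: "forward_eq T r u \<Longrightarrow> set_integrable lborel {0..T} (\<lambda>s. forward_rhs r u s z)"
  unfolding forward_eq_def by blast

lemma forward_eq_integral_identity: "forward_eq T r u \<Longrightarrow> t \<in> {0..T} \<Longrightarrow> u t z = u 0 z + (LINT s:{0..t}|lborel. forward_rhs r u s z)"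
  unfolding forward_eq_def by blast

lemma forward_rhs_integrable_on:
  "forward_eq T r u \<Longrightarrow> 0 \<le> a \<Longrightarrow> b \<le> T \<Longrightarrow> (\<lambda>s. forward_rhs r u s z) integrable_on {a..b}"
  by (rule set_borel_integral_eq_integral_subinterval(1)[OF forward_eq_integrable])

lemma forward_eq_increment:
  assumes u: "forward_eq T r u" and "0 \<le> a" "a \<le> t" "t \<le> T"
  shows "u t z - u a z = integral {a..t} (\<lambda>s. forward_rhs r u s z)"
proof -
  have eq: "u x z = u 0 z + integral {0..x} (\<lambda>s. forward_rhs r u s z)" if "0 \<le> x" "x \<le> T" for x
    using forward_eq_integral_identity[OF u, of x z] that
      set_borel_integral_eq_integral_subinterval(2)[OF forward_eq_integrable[OF u], of 0 x] by simp
  have "integral {0..a} (\<lambda>s. forward_rhs r u s z) + integral {a..t} (\<lambda>s. forward_rhs r u s z)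
      = integral {0..t} (\<lambda>s. forward_rhs r u s z)"
    using assms by (intro Henstock_Kurzweil_Integration.integral_combine forward_rhs_integrable_on) auto
  with eq[of t] eq[of a] assms show ?thesis by linarith
qed

lemma continuous_on_forward_eq:
  assumes u: "forward_eq T r u"
  shows "continuous_on {0..T} (\<lambda>t. u t z)"
proof (cases "0 \<le> T")
  case True
  have "continuous_on {0..T} (\<lambda>t. u 0 z + integral {0..t} (\<lambda>s. forward_rhs r u s z))"
    using True by (intro continuous_intros indefinite_integral_continuous_1 forward_rhs_integrable_on[OF u]) auto
  then show ?thesis
  proof (rule continuous_on_eq)
    fix t assume "t \<in> {0..T}"
    then show "u 0 z + integral {0..t} (\<lambda>s. forward_rhs r u s z) = u t z"
      using forward_eq_increment[OF u, of 0 t z] by simp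
  qed
qed simp

lemma forward_eq_sum_const:
  assumes u: "forward_eq T r u" and t: "t \<in> {0..T}"
  shows "(\<Sum>z\<in>UNIV. u t z) = (\<Sum>z\<in>UNIV. u 0 z)"
proof -
  have int: "set_integrable lborel {0..t} (\<lambda>s. forward_rhs r u s z)" for z
    by (rule set_integrable_subset[OF forward_eq_integrable[OF u]]) (use t in auto)
  have zero: "(\<Sum>z\<in>UNIV. forward_rhs r u s z) = 0" for s
    unfolding forward_rhs_def
    by (subst sum.swap) (simp add: sum_distrib_left[symmetric] gen_row_sum)
  have "(\<Sum>z\<in>UNIV. u t z) = (\<Sum>z\<in>UNIV. u 0 z) + (\<Sum>z\<in>UNIV. LINT s:{0..t}|lborel. forward_rhs r u s z)"
    using forward_eq_integral_identity[OF u t] by (simp add: sum.distrib)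
  also have "(\<Sum>z\<in>UNIV. LINT s:{0..t}|lborel. forward_rhs r u s z)
      = (LINT s:{0..t}|lborel. \<Sum>z\<in>UNIV. forward_rhs r u s z)"
    by (rule set_integral_sum[where f="\<lambda>z s. forward_rhs r u s z", symmetric]) (auto intro: int)
  finally show ?thesis by (simp add: zero)
qed

lemma forward_eq_lincomb:
  fixes U :: "'i::finite \<Rightarrow> real \<Rightarrow> 'v::finite \<Rightarrow> real"
  assumes U: "\<And>x. forward_eq T r (U x)"
  shows "forward_eq T r (\<lambda>t z. \<Sum>x\<in>UNIV. c x * U x t z)"
proof -
  have rhs: "forward_rhs r (\<lambda>t z. \<Sum>x\<in>UNIV. c x * U x t z) s z = (\<Sum>x\<in>UNIV. c x * forward_rhs r (U x) s z)" for s z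
    unfolding forward_rhs_def sum_distrib_left sum_distrib_right
    by (subst sum.swap) (simp add: mult.assoc)
  have int: "set_integrable lborel {0..t} (\<lambda>s. c x * forward_rhs r (U x) s z)" if "t \<in> {0..T}" for t x z
    using that by (intro set_integrable_mult_right set_integrable_subset[OF forward_eq_integrable[OF U]]) auto
  show ?thesis
    unfolding forward_eq_def rhs
  proof (intro conjI allI impI)
    show "set_integrable lborel {0..T} (\<lambda>s. \<Sum>x\<in>UNIV. c x * forward_rhs r (U x) s z)" for z
      using forward_eq_integrable[OF U] by (intro set_integrable_sum set_integrable_mult_right) auto
    show "(\<Sum>x\<in>UNIV. c x * U x t z) = (\<Sum>x\<in>UNIV. c x * U x 0 z)
        + (LINT s:{0..t}|lborel. \<Sum>x\<in>UNIV. c x * forward_rhs r (U x) s z)" if "t \<in> {0..T}" for z t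
    proof -
      have "c x * U x t z = c x * U x 0 z + (LINT s:{0..t}|lborel. c x * forward_rhs r (U x) s z)" for x
        using forward_eq_integral_identity[OF U that, of x z] by (simp add: distrib_left)
      then have "(\<Sum>x\<in>UNIV. c x * U x t z)
          = (\<Sum>x\<in>UNIV. c x * U x 0 z) + (\<Sum>x\<in>UNIV. LINT s:{0..t}|lborel. c x * forward_rhs r (U x) s z)"
        by (simp only: sum.distrib)
      also have "(\<Sum>x\<in>UNIV. LINT s:{0..t}|lborel. c x * forward_rhs r (U x) s z)
          = (LINT s:{0..t}|lborel. \<Sum>x\<in>UNIV. c x * forward_rhs r (U x) s z)"
        by (rule set_integral_sum[where f="\<lambda>x s. c x * forward_rhs r (U x) s z", symmetric])
          (auto intro: int[OF that])
      finally show ?thesis .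
    qed
  qed
qed

lemma forward_eq_diff:
  assumes u: "forward_eq T r u" and v: "forward_eq T r v"
  shows "forward_eq T r (\<lambda>t z. u t z - v t z)"
proof -
  have rhs: "forward_rhs r (\<lambda>t z. u t z - v t z) s z = forward_rhs r u s z - forward_rhs r v s z" for s z
    unfolding forward_rhs_def by (simp add: sum_subtractf left_diff_distrib)
  have int: "set_integrable lborel {0..t} (\<lambda>s. forward_rhs r w s z)"
    if "forward_eq T r w" "t \<in> {0..T}" for w t z
    using that by (intro set_integrable_subset[OF forward_eq_integrable]) auto
  show ?thesis
    unfolding forward_eq_def rhs
  proof (intro conjI allI impI)
    show "set_integrable lborel {0..T} (\<lambda>s. forward_rhs r u s z - forward_rhs r v s z)" for z
      using forward_eq_integrable[OF u] forward_eq_integrable[OF v] by (rule set_integral_diff)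
    show "u t z - v t z = u 0 z - v 0 z + (LINT s:{0..t}|lborel. forward_rhs r u s z - forward_rhs r v s z)"
      if "t \<in> {0..T}" for z t
      using forward_eq_integral_identity[OF u that, of z] forward_eq_integral_identity[OF v that, of z]
        set_integral_diff(2)[OF int[OF u that, of z] int[OF v that, of z]]
      by linarith
  qed
qed

lemma last_zero_before:
  fixes f :: "real \<Rightarrow> real"
  assumes f: "continuous_on {a..s} f" and "a \<le> s" "0 \<le> f a" "f s < 0"
  obtains s0 where "s0 \<in> {a..s}" "f s0 = 0" "\<And>\<sigma>. \<sigma> \<in> {s0..s} \<Longrightarrow> f \<sigma> \<le> 0"
proof -
  define A where "A = {a..s} \<inter> f -` {0..}"
  have "closed A" unfolding A_def by (rule continuous_closed_preimage[OF f]) auto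
  moreover have "a \<in> A" "bdd_above A" using assms unfolding A_def by auto
  ultimately have s0: "Sup A \<in> A" using closed_contains_Sup by blast
  have upper: "\<sigma> \<le> Sup A" if "\<sigma> \<in> A" for \<sigma> using cSup_upper[OF that \<open>bdd_above A\<close>] .
  have "continuous_on {Sup A..s} f" using s0 by (intro continuous_on_subset[OF f]) (auto simp: A_def)
  then obtain \<sigma> where \<sigma>: "Sup A \<le> \<sigma>" "\<sigma> \<le> s" "f \<sigma> = 0"
    using IVT2'[of f s 0 "Sup A"] s0 \<open>f s < 0\<close> by (auto simp: A_def)
  then have "f (Sup A) = 0" using upper[of \<sigma>] s0 by (auto simp: A_def)
  moreover have "f \<sigma> \<le> 0" if "\<sigma> \<in> {Sup A..s}" for \<sigma>
  proof (rule ccontr)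
    assume "\<not> f \<sigma> \<le> 0"
    then have "\<sigma> \<in> A" using that s0 by (auto simp: A_def)
    then have "\<sigma> \<le> Sup A" by (rule upper)
    then show False using that \<open>f (Sup A) = 0\<close> \<open>\<not> f \<sigma> \<le> 0\<close> by auto
  qed
  ultimately show ?thesis using that s0 by (auto simp: A_def)
qed

lemma forward_eq_neg_part_le:
  assumes ra: "rate_assms T0 r" and u: "forward_eq T r u" and "0 \<le> a" "a \<le> s" "s \<le> T"
    and init: "\<And>w. 0 \<le> u a w" and M: "\<And>\<sigma>. \<sigma> \<in> {a..s} \<Longrightarrow> (\<Sum>w\<in>UNIV. max 0 (- u \<sigma> w)) \<le> M"
  shows "max 0 (- u s y) \<le> M * integral {a..s} (gen_norm r)"
proof -
  have "0 \<le> (\<Sum>w\<in>UNIV. max 0 (- u a w))" by (intro sum_nonneg) auto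
  with M[of a] \<open>a \<le> s\<close> have "0 \<le> M" by simp
  have int_mono: "integral {c..s} (gen_norm r) \<le> integral {a..s} (gen_norm r)" if "a \<le> c" for c
    using integral_gen_norm_mono[OF ra \<open>0 \<le> a\<close> that order.refl] .
  show ?thesis
  proof (cases "0 \<le> u s y")
    case True
    then show ?thesis using \<open>0 \<le> M\<close> int_mono[of s] \<open>a \<le> s\<close> by (simp add: mult_nonneg_nonneg)
  next
    case False
    have "continuous_on {a..s} (\<lambda>\<sigma>. u \<sigma> y)"
      by (rule continuous_on_subset[OF continuous_on_forward_eq[OF u]]) (use assms in auto)
    then obtain s0 where s0: "s0 \<in> {a..s}" "u s0 y = 0" and nonpos: "\<And>\<sigma>. \<sigma> \<in> {s0..s} \<Longrightarrow> u \<sigma> y \<le> 0"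
      using last_zero_before[of a s "\<lambda>\<sigma>. u \<sigma> y"] \<open>a \<le> s\<close> init False by auto
    have "integral {s0..s} (\<lambda>\<sigma>. - M * gen_norm r \<sigma>) \<le> integral {s0..s} (\<lambda>\<sigma>. forward_rhs r u \<sigma> y)"
    proof (rule integral_le)
      show "(\<lambda>\<sigma>. - M * gen_norm r \<sigma>) integrable_on {s0..s}"
        using gen_norm_integrable_on[OF ra] s0 assms by (intro integrable_on_mult_right) auto
      show "(\<lambda>\<sigma>. forward_rhs r u \<sigma> y) integrable_on {s0..s}"
        using forward_rhs_integrable_on[OF u] s0 assms by auto
      fix \<sigma> assume \<sigma>: "\<sigma> \<in> {s0..s}"
      then have "- (\<Sum>w\<in>UNIV. max 0 (- u \<sigma> w)) * gen_norm r \<sigma> \<le> forward_rhs r u \<sigma> y"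
        using s0 assms nonpos[OF \<sigma>] by (intro forward_rhs_ge_neg_part[OF ra]) auto
      moreover have "- M * gen_norm r \<sigma> \<le> - (\<Sum>w\<in>UNIV. max 0 (- u \<sigma> w)) * gen_norm r \<sigma>"
        using M[of \<sigma>] \<sigma> s0 gen_norm_nonneg[of r \<sigma>] by (intro mult_right_mono) auto
      ultimately show "- M * gen_norm r \<sigma> \<le> forward_rhs r u \<sigma> y" by linarith
    qed
    moreover have "u s y = integral {s0..s} (\<lambda>\<sigma>. forward_rhs r u \<sigma> y)"
      using forward_eq_increment[OF u, of s0 s y] s0 assms by auto
    moreover have "M * integral {s0..s} (gen_norm r) \<le> M * integral {a..s} (gen_norm r)"
      using int_mono[of s0] s0 \<open>0 \<le> M\<close> by (intro mult_left_mono) auto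
    ultimately show ?thesis using False by simp
  qed
qed

lemma forward_eq_nonneg_short:
  fixes u :: "real \<Rightarrow> 'v::finite \<Rightarrow> real"
  assumes ra: "rate_assms T0 r" and u: "forward_eq T r u" and "0 \<le> a" "a \<le> t" "t \<le> T"
    and small: "integral {a..t} (gen_norm r) \<le> 1 / (2 * real CARD('v))" and init: "\<And>w. 0 \<le> u a w"
  shows "0 \<le> u t z"
proof -
  define N where "N = real CARD('v)"
  have "N > 0" unfolding N_def by simp
  define m where "m \<sigma> = (\<Sum>w\<in>UNIV. max 0 (- u \<sigma> w))" for \<sigma>
  have "continuous_on {a..t} m"
    unfolding m_def using assms
    by (intro continuous_intros continuous_on_subset[OF continuous_on_forward_eq[OF u]]) auto
  then obtain x0 where x0: "x0 \<in> {a..t}" and max: "\<And>\<sigma>. \<sigma> \<in> {a..t} \<Longrightarrow> m \<sigma> \<le> m x0"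
    using continuous_attains_sup[OF compact_Icc] \<open>a \<le> t\<close> by (metis atLeastAtMost_iff empty_iff order.refl)
  have "0 \<le> m x0" unfolding m_def by (intro sum_nonneg) auto
  (* On a short interval the total negative part stays below half of its own maximum. *)
  have part: "max 0 (- u s w) \<le> m x0 / (2 * N)" if "s \<in> {a..t}" for s w
  proof -
    have "max 0 (- u s w) \<le> m x0 * integral {a..s} (gen_norm r)"
      using that assms max by (intro forward_eq_neg_part_le[OF ra u _ _ _ init]) (auto simp: m_def)
    also have "\<dots> \<le> m x0 * (1 / (2 * N))"
      using integral_gen_norm_mono[OF ra \<open>0 \<le> a\<close> order.refl, of s t] that small \<open>0 \<le> m x0\<close>
      by (intro mult_left_mono) (auto simp: N_def)
    finally show ?thesis by simp
  qed
  have "m x0 = (\<Sum>w\<in>UNIV. max 0 (- u x0 w))" by (simp add: m_def)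
  also have "\<dots> \<le> (\<Sum>w\<in>(UNIV::'v set). m x0 / (2 * N))"
    by (intro sum_mono part[OF x0])
  also have "\<dots> = m x0 / 2" using \<open>N > 0\<close> by (simp add: N_def)
  finally have "m x0 = 0" using \<open>0 \<le> m x0\<close> by linarith
  then show ?thesis using part[of t z] assms by auto
qed

lemma forward_eq_nonneg:
  fixes u :: "real \<Rightarrow> 'v::finite \<Rightarrow> real"
  assumes ra: "rate_assms T0 r" and u: "forward_eq T r u" and init: "\<And>w. 0 \<le> u 0 w"
    and t: "t \<in> {0..T}"
  shows "0 \<le> u t z"
proof -
  have "0 \<le> T" "0 < 1 / (2 * real CARD('v))" using t by auto
  then obtain d where "d > 0" and
    d: "\<And>a b. 0 \<le> a \<Longrightarrow> a \<le> b \<Longrightarrow> b \<le> T \<Longrightarrow> b - a \<le> d \<Longrightarrow> integral {a..b} (gen_norm r) \<le> 1 / (2 * real CARD('v))"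
    using gen_norm_integral_small_on_short_intervals[OF ra] by blast
  have "\<forall>w. 0 \<le> u t w"
    using init by (intro interval_step_induct[where P="\<lambda>t. \<forall>w. 0 \<le> u t w", OF \<open>d > 0\<close> _ _ t])
      (auto intro: forward_eq_nonneg_short[OF ra u] d)
  then show ?thesis ..
qed

lemma forward_eq_unique:
  assumes ra: "rate_assms T0 r" and u: "forward_eq T r u" and v: "forward_eq T r v"
    and init: "\<And>w. u 0 w = v 0 w" and t: "t \<in> {0..T}"
  shows "u t z = v t z"
  using forward_eq_nonneg[OF ra forward_eq_diff[OF u v] _ t, of z]
    forward_eq_nonneg[OF ra forward_eq_diff[OF v u] _ t, of z] init
  by simp

section \<open>Positivity from strong connectivity\<close>

lemma forward_eq_le_twice:
  assumes ra: "rate_assms T0 r" and u: "forward_eq T r u" and nonneg: "\<And>t w. t \<in> {0..T} \<Longrightarrow> 0 \<le> u t w"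
    and "0 \<le> a" "a \<le> t" "t \<le> T" and small: "integral {a..t} (gen_norm r) \<le> 1/2" and s: "s \<in> {a..t}"
  shows "u s z \<le> 2 * u t z"
proof -
  have "continuous_on {a..t} (\<lambda>s. u s z)"
    by (rule continuous_on_subset[OF continuous_on_forward_eq[OF u]]) (use assms in auto)
  then obtain x0 where x0: "x0 \<in> {a..t}" and max: "\<And>s. s \<in> {a..t} \<Longrightarrow> u s z \<le> u x0 z"
    using continuous_attains_sup[OF compact_Icc] \<open>a \<le> t\<close> by (metis atLeastAtMost_iff empty_iff order.refl)
  define M where "M = u x0 z"
  have "0 \<le> M" unfolding M_def using nonneg x0 assms by auto
  have "integral {x0..t} (\<lambda>\<sigma>. - M * gen_norm r \<sigma>) \<le> integral {x0..t} (\<lambda>\<sigma>. forward_rhs r u \<sigma> z)"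
  proof (rule integral_le)
    show "(\<lambda>\<sigma>. - M * gen_norm r \<sigma>) integrable_on {x0..t}"
      using gen_norm_integrable_on[OF ra] x0 assms by (intro integrable_on_mult_right) auto
    show "(\<lambda>\<sigma>. forward_rhs r u \<sigma> z) integrable_on {x0..t}"
      using forward_rhs_integrable_on[OF u] x0 assms by auto
    fix \<sigma> assume \<sigma>: "\<sigma> \<in> {x0..t}"
    then have "0 \<le> \<sigma>" "\<sigma> \<in> {0..T}" using x0 assms by auto
    then have "u \<sigma> z * gen r \<sigma> z z \<le> forward_rhs r u \<sigma> z"
      using forward_rhs_ge_partial_sum[OF ra, of \<sigma> u z "{z}"] nonneg by simp
    moreover have "- M * gen_norm r \<sigma> \<le> u \<sigma> z * gen r \<sigma> z z"
    proof -
      have "u \<sigma> z \<le> M" "0 \<le> u \<sigma> z" using max[of \<sigma>] \<sigma> x0 nonneg \<open>\<sigma> \<in> {0..T}\<close> by (auto simp: M_def)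
      moreover have "- gen_norm r \<sigma> \<le> gen r \<sigma> z z" using abs_gen_le_gen_norm[of r \<sigma> z z] by auto
      ultimately have "u \<sigma> z * (- gen_norm r \<sigma>) \<le> u \<sigma> z * gen r \<sigma> z z"
          and "u \<sigma> z * gen_norm r \<sigma> \<le> M * gen_norm r \<sigma>"
        using mult_left_mono[of "- gen_norm r \<sigma>" "gen r \<sigma> z z" "u \<sigma> z"]
          mult_right_mono[OF _ gen_norm_nonneg, of "u \<sigma> z" M r \<sigma>] by auto
      then show ?thesis by simp
    qed
    ultimately show "- M * gen_norm r \<sigma> \<le> forward_rhs r u \<sigma> z" by linarith
  qed
  moreover have "u t z - u x0 z = integral {x0..t} (\<lambda>\<sigma>. forward_rhs r u \<sigma> z)"
    using forward_eq_increment[OF u, of x0 t z] x0 assms by auto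
  moreover have "M * integral {x0..t} (gen_norm r) \<le> M * (1/2)"
    using integral_gen_norm_mono[OF ra \<open>0 \<le> a\<close>, of x0 t t] x0 small \<open>0 \<le> M\<close>
    by (intro mult_left_mono) auto
  ultimately have "M / 2 \<le> u t z" unfolding M_def by simp
  then show ?thesis using max[OF s] by (simp add: M_def)
qed

lemma forward_eq_pos_persists:
  assumes ra: "rate_assms T0 r" and u: "forward_eq T r u" and nonneg: "\<And>t w. t \<in> {0..T} \<Longrightarrow> 0 \<le> u t w"
    and init: "0 < u 0 x" and t: "t \<in> {0..T}"
  shows "0 < u t x"
proof -
  obtain d where "d > 0" and
    d: "\<And>a b. 0 \<le> a \<Longrightarrow> a \<le> b \<Longrightarrow> b \<le> T \<Longrightarrow> b - a \<le> d \<Longrightarrow> integral {a..b} (gen_norm r) \<le> 1/2"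
    using gen_norm_integral_small_on_short_intervals[OF ra, of T "1/2"] t by auto
  show ?thesis
  proof (rule interval_step_induct[where P="\<lambda>t. 0 < u t x", OF \<open>d > 0\<close> init _ t])
    fix a t assume "0 \<le> a" "a \<le> t" "t \<le> T" "t - a \<le> d" "0 < u a x"
    moreover from this have "u a x \<le> 2 * u t x"
      using d[of a t] forward_eq_le_twice[OF ra u nonneg, of a t a x] by auto
    ultimately show "0 < u t x" by linarith
  qed
qed

lemma forward_eq_pos_along_edge:
  assumes ra: "rate_assms T0 r" and u: "forward_eq T r u" and nonneg: "\<And>t w. t \<in> {0..T} \<Longrightarrow> 0 \<le> u t w"
    and pos: "\<And>t. t \<in> {0<..T} \<Longrightarrow> 0 < u t y" and edge: "rate_edge r y z" and t: "t \<in> {0<..T}"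
  shows "0 < u t z"
proof (rule ccontr)
  assume "\<not> 0 < u t z"
  then have "u t z = 0" using nonneg[of t z] t by auto
  have "y \<noteq> z" and r_pos: "\<And>t. 0 < t \<Longrightarrow> 0 < r y z t" using edge unfolding rate_edge_def by auto
  obtain d where "d > 0" and
    d: "\<And>a b. 0 \<le> a \<Longrightarrow> a \<le> b \<Longrightarrow> b \<le> T \<Longrightarrow> b - a \<le> d \<Longrightarrow> integral {a..b} (gen_norm r) \<le> 1/2"
    using gen_norm_integral_small_on_short_intervals[OF ra, of T "1/2"] t by auto
  define a where "a = max 0 (t - d)"
  have a: "0 \<le> a" "a < t" "t - a \<le> d" using t \<open>d > 0\<close> by (auto simp: a_def)
  have zero: "u s z = 0" if "s \<in> {a..t}" for s
    using forward_eq_le_twice[OF ra u nonneg, of a t s z] d[of a t] nonneg[of s z] that a t \<open>u t z = 0\<close>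
    by auto
  have int: "set_integrable lborel {a..t} (\<lambda>\<sigma>. u \<sigma> y * r y z \<sigma>)"
    using a t
    by (intro set_integrable_continuous_mult set_integrable_subset[OF rate_assms_integrable[OF ra, of t]]
        continuous_on_subset[OF continuous_on_forward_eq[OF u]]) auto
  have "0 < (LINT \<sigma>:{a..t}|lborel. u \<sigma> y * r y z \<sigma>)"
    using int a t nonneg pos r_pos rate_assms_nonneg[OF ra]
    by (intro set_integral_pos_Icc) (auto intro!: mult_nonneg_nonneg mult_pos_pos)
  also have "\<dots> = integral {a..t} (\<lambda>\<sigma>. u \<sigma> y * r y z \<sigma>)"
    using set_borel_integral_eq_integral(2)[OF int] .
  also have "\<dots> \<le> integral {a..t} (\<lambda>\<sigma>. forward_rhs r u \<sigma> z)"
  proof (rule integral_le)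
    show "(\<lambda>\<sigma>. u \<sigma> y * r y z \<sigma>) integrable_on {a..t}"
      using set_borel_integral_eq_integral(1)[OF int] .
    show "(\<lambda>\<sigma>. forward_rhs r u \<sigma> z) integrable_on {a..t}"
      using forward_rhs_integrable_on[OF u] a t by auto
    fix \<sigma> assume "\<sigma> \<in> {a..t}"
    then have "(\<Sum>w\<in>{z, y}. u \<sigma> w * gen r \<sigma> w z) \<le> forward_rhs r u \<sigma> z"
      using a t nonneg by (intro forward_rhs_ge_partial_sum[OF ra]) auto
    then show "u \<sigma> y * r y z \<sigma> \<le> forward_rhs r u \<sigma> z"
      using zero[OF \<open>\<sigma> \<in> {a..t}\<close>] \<open>y \<noteq> z\<close> by (simp add: gen_off_diag)
  qed
  also have "\<dots> = u t z - u a z"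
    using forward_eq_increment[OF u, of a t z] a t by auto
  finally show False using zero[of a] \<open>u t z = 0\<close> a by auto
qed

lemma forward_eq_pos:
  assumes ra: "rate_assms T0 r" and A2: "rate_A2 r" and u: "forward_eq T r u"
    and nonneg: "\<And>t w. t \<in> {0..T} \<Longrightarrow> 0 \<le> u t w" and init: "0 < u 0 x" and t: "t \<in> {0<..T}"
  shows "0 < u t z"
proof -
  have "(x, z) \<in> {(a, b). rate_edge r a b}\<^sup>*" using A2 unfolding rate_A2_def by blast
  then show ?thesis using t
  proof (induction arbitrary: t rule: rtrancl_induct)
    case base
    then show ?case using forward_eq_pos_persists[OF ra u nonneg init] by auto
  next
    case (step y z)
    then show ?case using forward_eq_pos_along_edge[OF ra u nonneg, of y z] by auto
  qed
qed

section \<open>Transition probabilities and their invariant vector\<close>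

lemma abs_sum_less_sum_abs:
  fixes c :: "'a \<Rightarrow> real"
  assumes "finite A" "x1 \<in> A" "x2 \<in> A" "0 < c x1" "c x2 < 0"
  shows "\<bar>\<Sum>x\<in>A. c x\<bar> < (\<Sum>x\<in>A. \<bar>c x\<bar>)"
proof -
  have "\<bar>c x2\<bar> - c x2 \<le> (\<Sum>x\<in>A. \<bar>c x\<bar> - c x)" by (rule member_le_sum) (use assms in auto)
  moreover have "\<bar>c x1\<bar> + c x1 \<le> (\<Sum>x\<in>A. \<bar>c x\<bar> + c x)" by (rule member_le_sum) (use assms in auto)
  ultimately show ?thesis using assms by (simp add: sum_subtractf sum.distrib abs_less_iff)
qed

text \<open>A stochastic matrix with positive entries strictly decreases the \<open>\<ell>\<^sup>1\<close> norm of every vector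
  that has entries of both signs, so such a vector cannot be invariant.\<close>

lemma zero_sum_invariant_vector_eq_0:
  fixes p :: "'v::finite \<Rightarrow> 'v \<Rightarrow> real" and d :: "'v \<Rightarrow> real"
  assumes pos: "\<And>x z. 0 < p x z" and row: "\<And>x. (\<Sum>z\<in>UNIV. p x z) = 1"
    and inv: "\<And>z. (\<Sum>x\<in>UNIV. d x * p x z) = d z" and zero_sum: "(\<Sum>x\<in>UNIV. d x) = 0"
  shows "d x = 0"
proof (rule ccontr)
  assume "d x \<noteq> 0"
  have "\<exists>x1. 0 < d x1"
  proof (rule ccontr)
    assume "\<nexists>x1. 0 < d x1"
    then have "\<forall>y\<in>UNIV. 0 \<le> - d y" by (simp add: not_less)
    then show False
      using sum_nonneg_eq_0_iff[of UNIV "\<lambda>y. - d y"] zero_sum \<open>d x \<noteq> 0\<close> by (simp add: sum_negf)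
  qed
  moreover have "\<exists>x2. d x2 < 0"
  proof (rule ccontr)
    assume "\<nexists>x2. d x2 < 0"
    then have "\<forall>y\<in>UNIV. 0 \<le> d y" by (simp add: not_less)
    then show False using sum_nonneg_eq_0_iff[of UNIV d] zero_sum \<open>d x \<noteq> 0\<close> by simp
  qed
  ultimately obtain x1 x2 where "0 < d x1" "d x2 < 0" by blast
  have "\<bar>d z\<bar> < (\<Sum>x\<in>UNIV. \<bar>d x\<bar> * p x z)" for z
  proof -
    have "\<bar>d z\<bar> < (\<Sum>x\<in>UNIV. \<bar>d x * p x z\<bar>)"
      unfolding inv[of z, symmetric] using \<open>0 < d x1\<close> \<open>d x2 < 0\<close> pos
      by (intro abs_sum_less_sum_abs[of UNIV x1 x2]) (auto simp: mult_neg_pos)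
    then show ?thesis using pos by (simp add: abs_mult abs_of_pos)
  qed
  then have "(\<Sum>z\<in>UNIV. \<bar>d z\<bar>) < (\<Sum>z\<in>UNIV. \<Sum>x\<in>UNIV. \<bar>d x\<bar> * p x z)"
    by (intro sum_strict_mono) auto
  also have "\<dots> = (\<Sum>x\<in>UNIV. \<bar>d x\<bar> * (\<Sum>z\<in>UNIV. p x z))"
    by (subst sum.swap) (simp add: sum_distrib_left)
  finally show False by (simp add: row)
qed

lemma transition_at_0: "is_transition_from0 r P \<Longrightarrow> P 0 x z = (if x = z then 1 else 0)"
  unfolding is_transition_from0_def using set_integral_degenerate_interval by fastforce

lemma transition_forward_eq:
  assumes tr: "is_transition_from0 r P" and "0 \<le> T"
  shows "forward_eq T r (\<lambda>t z. P t x z)"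
  using tr unfolding forward_eq_def forward_rhs_def is_transition_from0_def
  by (simp add: transition_at_0[OF tr] \<open>0 \<le> T\<close>)

lemma transition_mixture_at_0: "is_transition_from0 r P \<Longrightarrow> (\<Sum>x\<in>UNIV. c x * P 0 x z) = c z"
  by (simp add: transition_at_0 if_distrib cong: if_cong)

lemma transition_mixture_forward_eq:
  "is_transition_from0 r P \<Longrightarrow> 0 \<le> T \<Longrightarrow> forward_eq T r (\<lambda>t z. \<Sum>x\<in>UNIV. c x * P t x z)"
  using forward_eq_lincomb[of T r "\<lambda>x t z. P t x z" c] transition_forward_eq by blast

lemma transition_pos:
  assumes ra: "rate_assms T0 r" and A2: "rate_A2 r" and tr: "is_transition_from0 r P" and "0 < t"
  shows "0 < P t x z"
proof -
  have P: "forward_eq t r (\<lambda>t z. P t x z)" using transition_forward_eq[OF tr] \<open>0 < t\<close> by simp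
  have "0 \<le> P s x w" if "s \<in> {0..t}" for s w
    using forward_eq_nonneg[OF ra P _ that] by (simp add: transition_at_0[OF tr])
  then show ?thesis
    using forward_eq_pos[OF ra A2 P, of x t z] \<open>0 < t\<close> by (simp add: transition_at_0[OF tr])
qed

lemma transition_row_sum:
  assumes tr: "is_transition_from0 r P" and "0 \<le> t"
  shows "(\<Sum>z\<in>UNIV. P t x z) = 1"
  using forward_eq_sum_const[OF transition_forward_eq[OF tr \<open>0 \<le> t\<close>], of t] \<open>0 \<le> t\<close>
  by (simp add: transition_at_0[OF tr])

section \<open>Weak solutions\<close>

lemma divQ_eq_uminus_forward_rhs: "divQ r \<mu> s y = - forward_rhs r (\<lambda>t z. \<mu> z t) s y"
proof -
  have "(\<Sum>w\<in>UNIV. \<mu> w s * (if w = y then \<Sum>v\<in>UNIV. r w v s else 0)) = \<mu> y s * (\<Sum>v\<in>UNIV. r y v s)"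
    by (simp add: if_distrib cong: if_cong)
  then show ?thesis
    unfolding divQ_def forward_rhs_def gen_def
    by (simp add: right_diff_distrib sum_subtractf sum_distrib_left)
qed

lemma test_fun_at_vertex:
  assumes "\<And>t. (\<phi> has_real_derivative \<phi>' t) (at t)" and "continuous_on UNIV \<phi>'" and "\<And>t. \<phi> (t + T) = \<phi> t"
  shows "test_fun T (\<lambda>y' t. if y' = y then \<phi> t else 0) (\<lambda>y' t. if y' = y then \<phi>' t else 0)"
  unfolding test_fun_def
proof (intro conjI allI)
  show "continuous_on UNIV (\<lambda>t. if y' = y then \<phi>' t else 0)" for y'
    using assms by (cases "y' = y") simp_all
qed (use assms in auto)

lemma forward_eq_periodic_weak_identity:
  assumes "0 < T" and u: "forward_eq T r u" and periodic: "u T y = u 0 y"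
    and \<phi>: "\<And>t. (\<phi> has_real_derivative \<phi>' t) (at t)" and \<phi>': "continuous_on UNIV \<phi>'"
    and \<phi>_periodic: "\<And>t. \<phi> (t + T) = \<phi> t"
  shows "(LINT s:{0..T}|lborel. divQ r (\<lambda>y t. u t y) s y * \<phi> s) = (LINT s:{0..T}|lborel. u s y * \<phi>' s)"
proof -
  have \<phi>'_T: "continuous_on {0..T} \<phi>'" using \<phi>' by (rule continuous_on_subset) simp
  have rhs: "set_integrable lborel {0..T} (\<lambda>s. forward_rhs r u s y)" by (rule forward_eq_integrable[OF u])
  have u_y: "continuous_on {0..T} (\<lambda>s. u s y)" by (rule continuous_on_forward_eq[OF u])
  have increment: "(LINT s:{0..t}|lborel. forward_rhs r u s y) = u t y - u 0 y" if "t \<in> {0..T}" for t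
    using forward_eq_integral_identity[OF u that] by simp
  have "(LINT t:{0..T}|lborel. forward_rhs r u t y * \<phi> t)
      = - (LINT t:{0..T}|lborel. \<phi>' t * (LINT s:{0..t}|lborel. forward_rhs r u s y))"
    using set_integral_by_parts_indefinite[OF rhs _ \<phi> \<phi>'] \<open>0 < T\<close> increment[of T] periodic by simp
  also have "(LINT t:{0..T}|lborel. \<phi>' t * (LINT s:{0..t}|lborel. forward_rhs r u s y))
      = (LINT t:{0..T}|lborel. u t y * \<phi>' t - u 0 y * \<phi>' t)"
    by (rule set_lebesgue_integral_cong) (auto simp: increment algebra_simps)
  also have "\<dots> = (LINT t:{0..T}|lborel. u t y * \<phi>' t) - u 0 y * (\<phi> T - \<phi> 0)"
    using borel_integrable_atLeastAtMost'[OF continuous_on_mult[OF u_y \<phi>'_T]]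
      borel_integrable_atLeastAtMost'[OF \<phi>'_T] set_integral_FTC[OF _ \<phi> \<phi>'_T] \<open>0 < T\<close>
    by (simp add: set_integral_diff)
  finally show ?thesis
    using \<phi>_periodic[of 0] by (simp add: divQ_eq_uminus_forward_rhs set_lebesgue_integral_def)
qed

lemma forward_eq_periodic_weak_solution:
  assumes "0 < T" and u: "forward_eq T r u" and periodic: "\<And>y. u T y = u 0 y"
  shows "weak_solution T r (\<lambda>y t. u t y)"
  unfolding weak_solution_def
proof (intro allI impI)
  fix f f' :: "'a \<Rightarrow> real \<Rightarrow> real"
  assume "test_fun T f f'"
  then have f: "\<And>y t. (f y has_real_derivative f' y t) (at t)" and f': "\<And>y. continuous_on UNIV (f' y)"
    and f_periodic: "\<And>y t. f y (t + T) = f y t"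
    unfolding test_fun_def by blast+
  have cont: "continuous_on {0..T} (f y)" "continuous_on {0..T} (f' y)" for y
    using f f' by (auto intro: continuous_on_subset DERIV_isCont continuous_at_imp_continuous_on)
  have int1: "set_integrable lborel {0..T} (\<lambda>s. u s y * f' y s)" for y
    by (intro borel_integrable_atLeastAtMost' continuous_on_mult continuous_on_forward_eq[OF u] cont)
  have int2: "set_integrable lborel {0..T} (\<lambda>s. divQ r (\<lambda>y t. u t y) s y * f y s)" for y
    using set_integrable_continuous_mult[OF set_integrable_mult_right[OF forward_eq_integrable[OF u], of "-1"] cont(1)]
    by (simp add: divQ_eq_uminus_forward_rhs mult.commute)
  show "set_integrable lborel {0..T} (\<lambda>s. \<Sum>y\<in>UNIV. u s y * f' y s)
      \<and> set_integrable lborel {0..T} (\<lambda>s. \<Sum>y\<in>UNIV. divQ r (\<lambda>y t. u t y) s y * f y s)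
      \<and> (LINT s:{0..T}|lborel. \<Sum>y\<in>UNIV. u s y * f' y s)
        = (LINT s:{0..T}|lborel. \<Sum>y\<in>UNIV. divQ r (\<lambda>y t. u t y) s y * f y s)"
    using int1 int2 forward_eq_periodic_weak_identity[OF \<open>0 < T\<close> u periodic f f' f_periodic]
    by (simp add: set_integrable_sum set_integral_sum)
qed

lemma forward_eq_in_M_plus:
  assumes "0 < T" and u: "forward_eq T r u" and nonneg: "\<And>t y. t \<in> {0..T} \<Longrightarrow> 0 \<le> u t y"
    and mass: "(\<Sum>y\<in>UNIV. u 0 y) = 1"
  shows "in_M_plus T (\<lambda>y t. u t y)"
  unfolding in_M_plus_def
proof (intro conjI allI impI)
  show "set_borel_measurable lborel {0..T} (\<lambda>t. u t y)" for y
    unfolding set_borel_measurable_def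
    using borel_measurable_continuous_on_indicator[OF _ continuous_on_forward_eq[OF u]] by simp
  show "set_integrable lborel {0..T} (\<lambda>t. u t y)" for y
    by (rule borel_integrable_atLeastAtMost'[OF continuous_on_forward_eq[OF u]])
  have "(LINT t:{0..T}|lborel. (\<Sum>y\<in>UNIV. u t y)) = (LINT t:{0..T}|lborel. 1)"
    using forward_eq_sum_const[OF u] mass by (intro set_lebesgue_integral_cong) auto
  then show "(LINT t:{0..T}|lborel. (\<Sum>y\<in>UNIV. u t y)) = T"
    using \<open>0 < T\<close> by (simp add: set_integral_const emeasure_lborel_Icc_eq)
qed (use nonneg in auto)

lemma weak_solution_at_vertex:
  assumes ws: "weak_solution T r \<mu>"
    and \<phi>: "\<And>t. (\<phi> has_real_derivative \<phi>' t) (at t)" "continuous_on UNIV \<phi>'" "\<And>t. \<phi> (t + T) = \<phi> t"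
  shows "set_integrable lborel {0..T} (\<lambda>s. divQ r \<mu> s y * \<phi> s)"
    and "(LINT s:{0..T}|lborel. \<mu> y s * \<phi>' s) = (LINT s:{0..T}|lborel. divQ r \<mu> s y * \<phi> s)"
proof -
  have "set_integrable lborel {0..T} (\<lambda>s. \<Sum>y'\<in>UNIV. divQ r \<mu> s y' * (if y' = y then \<phi> s else 0))
    \<and> (LINT s:{0..T}|lborel. \<Sum>y'\<in>UNIV. \<mu> y' s * (if y' = y then \<phi>' s else 0))
      = (LINT s:{0..T}|lborel. \<Sum>y'\<in>UNIV. divQ r \<mu> s y' * (if y' = y then \<phi> s else 0))"
    using ws test_fun_at_vertex[OF \<phi>, of y] unfolding weak_solution_def by blast
  then show "set_integrable lborel {0..T} (\<lambda>s. divQ r \<mu> s y * \<phi> s)"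
    and "(LINT s:{0..T}|lborel. \<mu> y s * \<phi>' s) = (LINT s:{0..T}|lborel. divQ r \<mu> s y * \<phi> s)"
    by (simp_all add: if_distrib cong: if_cong)
qed

lemma weak_solution_divQ:
  assumes ws: "weak_solution T r \<mu>"
  shows "set_integrable lborel {0..T} (\<lambda>s. divQ r \<mu> s y)" and "(LINT s:{0..T}|lborel. divQ r \<mu> s y) = 0"
  using weak_solution_at_vertex[OF ws, of "\<lambda>_. 1" "\<lambda>_. 0" y] by simp_all

lemma weak_solution_plus_integrated_flux_AE_const:
  assumes "0 < T" and \<mu>: "set_integrable lborel {0..T} (\<mu> y)" and ws: "weak_solution T r \<mu>"
  shows "\<exists>c. AE t in lborel. t \<in> {0..T} \<longrightarrow> \<mu> y t + (LINT s:{0..t}|lborel. divQ r \<mu> s y) = c"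
proof (rule AE_const_if_orthogonal_to_periodic_derivatives[OF \<open>0 < T\<close>])
  define D where "D t = (LINT s:{0..t}|lborel. divQ r \<mu> s y)" for t
  have D_cont: "continuous_on {0..T} D"
    unfolding D_def by (rule continuous_on_indefinite_set_integral[OF weak_solution_divQ(1)[OF ws]])
  show "set_integrable lborel {0..T} (\<lambda>t. \<mu> y t + D t)"
    using \<mu> borel_integrable_atLeastAtMost'[OF D_cont] by (rule set_integral_add)
  fix \<phi> \<phi>' assume \<phi>: "\<And>t. (\<phi> has_real_derivative \<phi>' t) (at t)" and \<phi>': "continuous_on UNIV \<phi>'"
    and periodic: "\<And>t. \<phi> (t + T) = \<phi> t"
  have \<phi>'_T: "continuous_on {0..T} \<phi>'" using \<phi>' by (rule continuous_on_subset) simp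
  have "set_integrable lborel {0..T} (\<lambda>t. \<mu> y t * \<phi>' t)"
    using set_integrable_continuous_mult[OF \<mu> \<phi>'_T] by (simp add: mult.commute)
  moreover have "set_integrable lborel {0..T} (\<lambda>t. \<phi>' t * D t)"
    by (rule borel_integrable_atLeastAtMost'[OF continuous_on_mult[OF \<phi>'_T D_cont]])
  ultimately have "(LINT t:{0..T}|lborel. \<mu> y t * \<phi>' t + \<phi>' t * D t)
      = (LINT t:{0..T}|lborel. \<mu> y t * \<phi>' t) + (LINT t:{0..T}|lborel. \<phi>' t * D t)"
    by (rule set_integral_add(2))
  moreover have "(LINT t:{0..T}|lborel. (\<mu> y t + D t) * \<phi>' t)
      = (LINT t:{0..T}|lborel. \<mu> y t * \<phi>' t + \<phi>' t * D t)"
    by (rule set_lebesgue_integral_cong) (auto simp: algebra_simps)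
  ultimately have "(LINT t:{0..T}|lborel. (\<mu> y t + D t) * \<phi>' t)
      = (LINT t:{0..T}|lborel. \<mu> y t * \<phi>' t) + (LINT t:{0..T}|lborel. \<phi>' t * D t)"
    by simp
  also have "(LINT t:{0..T}|lborel. \<mu> y t * \<phi>' t) = (LINT t:{0..T}|lborel. divQ r \<mu> t y * \<phi> t)"
    by (rule weak_solution_at_vertex(2)[OF ws \<phi> \<phi>' periodic])
  also have "\<dots> = - (LINT t:{0..T}|lborel. \<phi>' t * D t)"
    using set_integral_by_parts_indefinite[OF weak_solution_divQ(1)[OF ws] _ \<phi> \<phi>'] \<open>0 < T\<close>
    by (simp add: weak_solution_divQ(2)[OF ws] D_def)
  finally show "(LINT t:{0..T}|lborel. (\<mu> y t + (LINT s:{0..t}|lborel. divQ r \<mu> s y)) * \<phi>' t) = 0"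
    by (simp add: D_def)
qed

lemma forward_eq_if_AE_eq_integrated_flux:
  assumes ra: "rate_assms T0 r" and "0 \<le> T"
    and flux: "\<And>y. set_integrable lborel {0..T} (\<lambda>s. divQ r \<mu> s y)"
    and \<nu>_cont: "\<And>y. continuous_on {0..T} (\<lambda>t. \<nu> t y)"
    and \<nu>_eq: "\<And>t y. t \<in> {0..T} \<Longrightarrow> \<nu> t y = \<nu> 0 y - (LINT s:{0..t}|lborel. divQ r \<mu> s y)"
    and AE_eq: "AE t in lborel. t \<in> {0..T} \<longrightarrow> (\<forall>y. \<mu> y t = \<nu> t y)"
  shows "forward_eq T r \<nu>"
  unfolding forward_eq_def
proof (intro conjI allI impI)
  show rhs: "set_integrable lborel {0..T} (\<lambda>s. forward_rhs r \<nu> s z)" for z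
    unfolding forward_rhs_def using \<open>0 \<le> T\<close>
    by (intro set_integrable_sum set_integrable_continuous_mult set_integrable_gen[OF ra] \<nu>_cont) auto
  fix z t assume t: "t \<in> {0..T}"
  have "(LINT s:{0..t}|lborel. forward_rhs r \<nu> s z) = (LINT s:{0..t}|lborel. - divQ r \<mu> s z)"
  proof (rule set_integral_cong_AE_integrable)
    show "set_integrable lborel {0..t} (\<lambda>s. forward_rhs r \<nu> s z)"
      by (rule set_integrable_subset[OF rhs]) (use t in auto)
    have "set_integrable lborel {0..t} (\<lambda>s. divQ r \<mu> s z)"
      by (rule set_integrable_subset[OF flux]) (use t in auto)
    then show "set_integrable lborel {0..t} (\<lambda>s. - divQ r \<mu> s z)"
      using set_integrable_mult_right[where a="-1" and M=lborel and A="{0..t}"] by simp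
    show "AE s in lborel. s \<in> {0..t} \<longrightarrow> forward_rhs r \<nu> s z = - divQ r \<mu> s z"
      using AE_eq by eventually_elim (use t in \<open>auto simp: divQ_eq_uminus_forward_rhs forward_rhs_def\<close>)
  qed
  then show "\<nu> t z = \<nu> 0 z + (LINT s:{0..t}|lborel. forward_rhs r \<nu> s z)"
    using \<nu>_eq[OF t] by (simp add: set_lebesgue_integral_def)
qed

lemma weak_solution_imp_forward_eq:
  assumes ra: "rate_assms T0 r" and "0 < T" and \<mu>: "\<And>y. set_integrable lborel {0..T} (\<mu> y)"
    and ws: "weak_solution T r \<mu>"
  obtains \<nu> where "forward_eq T r \<nu>" "\<And>y. \<nu> T y = \<nu> 0 y"
    "AE t in lborel. t \<in> {0..T} \<longrightarrow> (\<forall>y. \<mu> y t = \<nu> t y)"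
proof -
  define D where "D y t = (LINT s:{0..t}|lborel. divQ r \<mu> s y)" for y t
  obtain c where c: "\<And>y. AE t in lborel. t \<in> {0..T} \<longrightarrow> \<mu> y t + D y t = c y"
    using weak_solution_plus_integrated_flux_AE_const[OF \<open>0 < T\<close> \<mu> ws] unfolding D_def by metis
  define \<nu> where "\<nu> t y = c y - D y t" for t y
  have AE_eq: "AE t in lborel. t \<in> {0..T} \<longrightarrow> (\<forall>y. \<mu> y t = \<nu> t y)"
  proof -
    have "AE t in lborel. \<forall>y\<in>UNIV. t \<in> {0..T} \<longrightarrow> \<mu> y t + D y t = c y"
      using c by (intro AE_finite_allI) auto
    then show ?thesis by eventually_elim (auto simp: \<nu>_def algebra_simps)
  qed
  have "D y 0 = 0" for y unfolding D_def by (rule set_integral_degenerate_interval)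
  then have \<nu>_eq: "\<nu> t y = \<nu> 0 y - (LINT s:{0..t}|lborel. divQ r \<mu> s y)" for t y
    by (simp add: \<nu>_def D_def[of y t])
  have \<nu>_cont: "continuous_on {0..T} (\<lambda>t. \<nu> t y)" for y
    unfolding \<nu>_def D_def
    using continuous_on_indefinite_set_integral[OF weak_solution_divQ(1)[OF ws]] by (intro continuous_intros)
  have "forward_eq T r \<nu>"
    using forward_eq_if_AE_eq_integrated_flux[OF ra _ weak_solution_divQ(1)[OF ws] \<nu>_cont \<nu>_eq AE_eq] \<open>0 < T\<close>
    by simp
  moreover have "\<nu> T y = \<nu> 0 y" for y
    using weak_solution_divQ(2)[OF ws, of y] \<open>D y 0 = 0\<close> by (simp add: \<nu>_def D_def[of y T])
  ultimately show ?thesis using that AE_eq by blast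
qed

lemma initial_mass_eq_1_if_AE_eq_in_M_plus:
  assumes "0 < T" and \<mu>: "in_M_plus T \<mu>" and \<nu>: "forward_eq T r \<nu>"
    and AE_eq: "AE t in lborel. t \<in> {0..T} \<longrightarrow> (\<forall>y. \<mu> y t = \<nu> t y)"
  shows "(\<Sum>y\<in>UNIV. \<nu> 0 y) = 1"
proof -
  have "T = (LINT t:{0..T}|lborel. (\<Sum>y\<in>UNIV. \<mu> y t))"
    using \<mu> unfolding in_M_plus_def by simp
  also have "\<dots> = (LINT t:{0..T}|lborel. (\<Sum>y\<in>UNIV. \<nu> t y))"
  proof (rule set_integral_cong_AE_integrable)
    show "set_integrable lborel {0..T} (\<lambda>t. \<Sum>y\<in>UNIV. \<mu> y t)"
      using \<mu> unfolding in_M_plus_def by (intro set_integrable_sum) auto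
    show "set_integrable lborel {0..T} (\<lambda>t. \<Sum>y\<in>UNIV. \<nu> t y)"
      using continuous_on_forward_eq[OF \<nu>] by (intro borel_integrable_atLeastAtMost' continuous_on_sum) auto
    show "AE t in lborel. t \<in> {0..T} \<longrightarrow> (\<Sum>y\<in>UNIV. \<mu> y t) = (\<Sum>y\<in>UNIV. \<nu> t y)"
      using AE_eq by eventually_elim simp
  qed
  also have "\<dots> = (LINT t:{0..T}|lborel. (\<Sum>y\<in>UNIV. \<nu> 0 y))"
    by (rule set_lebesgue_integral_cong) (auto intro: forward_eq_sum_const[OF \<nu>])
  also have "\<dots> = T * (\<Sum>y\<in>UNIV. \<nu> 0 y)"
    using \<open>0 < T\<close> by (simp add: set_integral_const emeasure_lborel_Icc_eq)
  finally show ?thesis using \<open>0 < T\<close> by simp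
qed

lemma weak_solution_unique:
  fixes \<mu> :: "'v::finite \<Rightarrow> real \<Rightarrow> real"
  assumes ra: "rate_assms T0 r" and A2: "rate_A2 r" and tr: "is_transition_from0 r P"
    and inv: "\<And>z. (\<Sum>x\<in>UNIV. \<pi>0 x * P T0 x z) = \<pi>0 z" and mass: "(\<Sum>x\<in>UNIV. \<pi>0 x) = 1"
    and \<mu>: "in_M_plus T0 \<mu>" and ws: "weak_solution T0 r \<mu>"
  shows "AE t in lborel. t \<in> {0..T0} \<longrightarrow> (\<forall>y. \<mu> y t = (\<Sum>x\<in>UNIV. \<pi>0 x * P t x y))"
proof -
  have "0 < T0" using ra by (rule rate_assms_period_pos)
  have "\<And>y. set_integrable lborel {0..T0} (\<mu> y)" using \<mu> unfolding in_M_plus_def by blast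
  then obtain \<nu> where \<nu>: "forward_eq T0 r \<nu>" and periodic: "\<And>y. \<nu> T0 y = \<nu> 0 y"
    and AE_eq: "AE t in lborel. t \<in> {0..T0} \<longrightarrow> (\<forall>y. \<mu> y t = \<nu> t y)"
    using weak_solution_imp_forward_eq[OF ra \<open>0 < T0\<close> _ ws] by blast
  have \<nu>_P: "\<nu> t z = (\<Sum>x\<in>UNIV. \<nu> 0 x * P t x z)" if "t \<in> {0..T0}" for t z
    using forward_eq_unique[OF ra \<nu> transition_mixture_forward_eq[OF tr, of T0 "\<lambda>x. \<nu> 0 x"] _ that]
      transition_mixture_at_0[OF tr] \<open>0 < T0\<close> by simp
  have "\<nu> 0 x - \<pi>0 x = 0" for x
  proof (rule zero_sum_invariant_vector_eq_0[of "P T0"])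
    show "0 < P T0 x z" for x z by (rule transition_pos[OF ra A2 tr \<open>0 < T0\<close>])
    show "(\<Sum>z\<in>UNIV. P T0 x z) = 1" for x using transition_row_sum[OF tr] \<open>0 < T0\<close> by simp
    show "(\<Sum>x\<in>UNIV. (\<nu> 0 x - \<pi>0 x) * P T0 x z) = \<nu> 0 z - \<pi>0 z" for z
      using \<nu>_P[of T0 z] periodic[of z] inv[of z] \<open>0 < T0\<close> by (simp add: left_diff_distrib sum_subtractf)
    show "(\<Sum>x\<in>UNIV. \<nu> 0 x - \<pi>0 x) = 0"
      using initial_mass_eq_1_if_AE_eq_in_M_plus[OF \<open>0 < T0\<close> \<mu> \<nu> AE_eq] mass by (simp add: sum_subtractf)
  qed
  then have "\<nu> t z = (\<Sum>x\<in>UNIV. \<pi>0 x * P t x z)" if "t \<in> {0..T0}" for t z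
    using \<nu>_P[OF that] by simp
  with AE_eq show ?thesis by (auto elim!: eventually_mono)
qed

theorem proposition7p5:
  fixes T0 :: real
    and r :: "'v::finite \<Rightarrow> 'v \<Rightarrow> real \<Rightarrow> real"
    and P :: "real \<Rightarrow> 'v \<Rightarrow> 'v \<Rightarrow> real"
    and \<pi>0 :: "'v \<Rightarrow> real"
  assumes "rate_assms T0 r" and "rate_A1 r" and "rate_A2 r"
    and "is_transition_from0 r P"
    and "\<forall>x. 0 \<le> \<pi>0 x" and "(\<Sum>x\<in>UNIV. \<pi>0 x) = 1"
    and "\<forall>z. (\<Sum>x\<in>UNIV. \<pi>0 x * P T0 x z) = \<pi>0 z"
  defines "\<pi> \<equiv> (\<lambda>y t. \<Sum>x\<in>UNIV. \<pi>0 x * P t x y)"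
  shows "in_M_plus T0 \<pi> \<and> weak_solution T0 r \<pi>
    \<and> (\<forall>\<mu>. in_M_plus T0 \<mu> \<and> weak_solution T0 r \<mu> \<longrightarrow>
           (AE t in lborel. t \<in> {0..T0} \<longrightarrow> (\<forall>y. \<mu> y t = \<pi> y t)))"
proof -
  have "0 < T0" using assms(1) by (rule rate_assms_period_pos)
  let ?u = "\<lambda>t y. \<Sum>x\<in>UNIV. \<pi>0 x * P t x y"
  have u: "forward_eq T0 r ?u"
    using transition_mixture_forward_eq[OF assms(4)] \<open>0 < T0\<close> by simp
  have u_0: "?u 0 y = \<pi>0 y" for y
    by (rule transition_mixture_at_0[OF assms(4)])
  have "0 \<le> ?u t y" if "t \<in> {0..T0}" for t y
    using forward_eq_nonneg[OF assms(1) u _ that] u_0 assms(5) by simp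
  then have "in_M_plus T0 \<pi>"
    using forward_eq_in_M_plus[OF \<open>0 < T0\<close> u] u_0 assms(6) unfolding \<pi>_def by simp
  moreover have "weak_solution T0 r \<pi>"
    using forward_eq_periodic_weak_solution[OF \<open>0 < T0\<close> u] u_0 assms(7) unfolding \<pi>_def by simp
  moreover have "AE t in lborel. t \<in> {0..T0} \<longrightarrow> (\<forall>y. \<mu> y t = \<pi> y t)"
    if "in_M_plus T0 \<mu>" and "weak_solution T0 r \<mu>" for \<mu>
    using weak_solution_unique[OF assms(1,3,4) _ assms(6) that] assms(7) unfolding \<pi>_def by simp
  ultimately show ?thesis by blast
qed

end
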